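(* For every cache size $k\ge1$, the algorithm Mark&Predict (described in the context) is a randomized $\big(2,H_k,\gamma(\eta_1/\mathrm{OPT})\big)$-competitive algorithm for the phase-predictions setup, where $H_k=\sum_{j=1}^k1/j$ and $\gamma(x)=2x^{-1}(\ln(2x+1)+1)$. That is, there is a constant $b$ (possibly depending on $k$) such that for every request sequence $I$ and every prediction vector $p$ with $\mathrm{OPT}(I)>0$ and $\eta_1>0$, $\mathbb{E}[\mathrm{ALG}(I,p)]\le 2\,\mathrm{OPT}(I)+H_k\,\eta_0+\gamma\big(\eta_1/\mathrm{OPT}(I)\big)\,\eta_1+b.$
   Context: Paging: there is a universe $U$ of pages and a cache holding at most $k$ pages, initially empty. Requests $r_1,\dots,r_n\in U$ arrive online. If the requested page is not in the cache (a page fault), it must be loaded into the cache, evicting some cached page if the cache already holds $k$ pages. The cost of an algorithm is its number of page faults; $\mathrm{OPT}(I)$ is the minimum cost of an offline algorithm on request sequence $I$. Along with each request $r_i$ the online algorithm receives a prediction bit $p_i\in\{0,1\}$ (which may be arbitrary). A page whose most recent prediction is $0$ (resp. $1$) is called a $0$-page (resp. $1$-page). Phase-predictions setup: partition the request sequence into $k$-phases: the first starts at $r_1$, each phase is a maximal contiguous segment containing at most $k$ distinct pages, and each subsequent phase starts right after the previous one ends. For a request $r_i$ in phase $j$, the ground truth is $p_i^*=0$ if page $r_i$ is requested in phase $j+1$ and $p_i^*=1$ otherwise. The errors are $\eta_h$ ($h\in\{0,1\}$) = number of counted requests $i$ with $p_i=h$ and $p_i^*=1-h$, where the counted requests are,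 for each phase $j$ other than the last phase and each page requested in phase $j$, only the last request to that page within phase $j$ (predictions in the last phase are not counted). Algorithm Mark&Predict: pages carry a mark. On request $r_i$: if $r_i$ is not in the cache and the cache is full, then (i) if all cached pages are marked, unmark all pages (start of a new phase); (ii) if there is an unmarked $1$-page in the cache, evict one chosen uniformly at random among unmarked $1$-pages, otherwise evict an unmarked $0$-page chosen uniformly at random; then load $r_i$. Finally (in all cases) mark $r_i$. *)

theory Defs
  imports "HOL-Probability.Probability"
begin

text \<open>An offline (demand-paging) run on request list rs with cache size k is a list of
  cache contents Cs, where Cs!i is the cache before request i (Cs!0 is empty).\<close>

definition offline_run :: "nat \<Rightarrow> 'a list \<Rightarrow> 'a set list \<Rightarrow> bool" where
  "offline_run k rs Cs \<longleftrightarrow>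
     length Cs = Suc (length rs) \<and> Cs ! 0 = {} \<and>
     (\<forall>i < length rs.
        (if rs ! i \<in> Cs ! i then Cs ! Suc i = Cs ! i
         else if card (Cs ! i) < k then Cs ! Suc i = insert (rs ! i) (Cs ! i)
         else (\<exists>q \<in> Cs ! i. Cs ! Suc i = insert (rs ! i) (Cs ! i - {q}))))"

definition run_cost :: "'a list \<Rightarrow> 'a set list \<Rightarrow> nat" where
  "run_cost rs Cs = card {i. i < length rs \<and> rs ! i \<notin> Cs ! i}"

definition OPT :: "nat \<Rightarrow> 'a list \<Rightarrow> nat" where
  "OPT k rs = Min {run_cost rs Cs | Cs. offline_run k rs Cs}"

definition next_start :: "nat \<Rightarrow> 'a list \<Rightarrow> nat \<Rightarrow> nat" where
  "next_start k rs s =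
     (if s < length rs then
        (LEAST t. s < t \<and> (t = length rs \<or> card (set (take (Suc t - s) (drop s rs))) > k))
      else length rs)"

text \<open>Start index of the j-th phase (0-based); phase j is the index interval
  [phase_start j, phase_start (j+1)). Beyond the end phases are empty.\<close>

definition phase_start :: "nat \<Rightarrow> 'a list \<Rightarrow> nat \<Rightarrow> nat" where
  "phase_start k rs j = (next_start k rs ^^ j) 0"

definition counted :: "nat \<Rightarrow> 'a list \<Rightarrow> nat \<Rightarrow> bool" where
  "counted k rs i \<longleftrightarrow> (\<exists>j. phase_start k rs j \<le> i \<and> i < phase_start k rs (Suc j) \<and>
      phase_start k rs (Suc j) < length rs \<and>
      \<not> (\<exists>i'. i < i' \<and> i' < phase_start k rs (Suc j) \<and> rs ! i' = rs ! i))"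

text \<open>Ground truth bit (True = 1): p*_i = 0 iff page rs!i is requested in the next phase.\<close>

definition truth :: "nat \<Rightarrow> 'a list \<Rightarrow> nat \<Rightarrow> bool" where
  "truth k rs i \<longleftrightarrow> (\<forall>j. phase_start k rs j \<le> i \<and> i < phase_start k rs (Suc j) \<longrightarrow>
      \<not> (\<exists>i'. phase_start k rs (Suc j) \<le> i' \<and> i' < phase_start k rs (Suc (Suc j)) \<and>
             rs ! i' = rs ! i))"

definition eta :: "nat \<Rightarrow> 'a list \<Rightarrow> bool list \<Rightarrow> bool \<Rightarrow> nat" where
  "eta k rs ps h = card {i. i < length rs \<and> counted k rs i \<and> ps ! i = h \<and> truth k rs i = (\<not> h)}"

text \<open>State: (cache, marked pages, most recent prediction per page, number of faults so far).\<close>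

type_synonym 'a mp_state = "'a set \<times> 'a set \<times> ('a \<Rightarrow> bool) \<times> nat"

fun mp_step :: "nat \<Rightarrow> 'a \<times> bool \<Rightarrow> 'a mp_state \<Rightarrow> 'a mp_state pmf" where
  "mp_step k (r, p) (C, M, pr, c) =
     (if r \<in> C then return_pmf (C, insert r M, pr(r := p), c)
      else if card C < k then return_pmf (insert r C, insert r M, pr(r := p), Suc c)
      else
        (let M' = (if C \<subseteq> M then {} else M);
             U = C - M';
             U1 = {q \<in> U. pr q};
             E = (if U1 \<noteq> {} then U1 else U)
         in map_pmf (\<lambda>q. (insert r (C - {q}), insert r M', pr(r := p), Suc c)) (pmf_of_set E)))"

definition mp_run :: "nat \<Rightarrow> 'a list \<Rightarrow> bool list \<Rightarrow> 'a mp_state pmf" where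
  "mp_run k rs ps =
     foldl (\<lambda>D rp. bind_pmf D (mp_step k rp)) (return_pmf ({}, {}, \<lambda>_. False, 0)) (zip rs ps)"

definition mp_expected_cost :: "nat \<Rightarrow> 'a list \<Rightarrow> bool list \<Rightarrow> real" where
  "mp_expected_cost k rs ps =
     measure_pmf.expectation (mp_run k rs ps) (\<lambda>s. real (snd (snd (snd s))))"

definition H :: "nat \<Rightarrow> real" where
  "H k = (\<Sum>j = 1..k. 1 / real j)"

definition gamma :: "real \<Rightarrow> real" where
  "gamma x = 2 / x * (ln (2 * x + 1) + 1)"

end

theory Submission
  imports Defs
begin

text \<open>
  The distribution of Mark&Predict's cache is described by a deterministic shape \<open>(M, U, h)\<close>:
  every configuration in its support has marked pages \<open>M\<close> and caches \<open>M\<close> together with all but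
  \<open>h\<close> pages of \<open>U\<close>, the pages of the previous phase not yet requested in the current one, where
  1-pages of \<open>U\<close> are evicted before 0-pages. The distribution is invariant under the permutations
  of \<open>U\<close> that preserve predictions, so a request to a page of \<open>U\<close> faults with probability
  \<open>min h u\<^sub>1 / u\<^sub>1\<close> if it is a 1-page and \<open>(h - min h u\<^sub>1) / u\<^sub>0\<close> if it is a 0-page,
  \<open>u\<^sub>b\<close> being the number of \<open>b\<close>-pages in \<open>U\<close>.

  A potential argument then bounds the expected faults in a phase \<open>j \<ge> 1\<close> with \<open>\<ell>\<close> new pages
  by \<open>2\<ell> + \<ell> ln (1 + e\<^sub>1/\<ell>) + e\<^sub>0 H\<^sub>k\<close>, where \<open>e\<^sub>1\<close>, \<open>e\<^sub>0\<close> are the phase's shares of \<open>\<eta>\<^sub>1\<close>,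
  \<open>\<eta>\<^sub>0\<close>; the first phase costs at most \<open>k\<close>. Since any offline algorithm faults at least \<open>\<ell>\<close>
  times during phases \<open>j - 1\<close> and \<open>j\<close>, the \<open>\<ell>\<close> sum to at most \<open>2 OPT\<close>, and a tangent-line
  bound for the concave function \<open>\<ell> \<mapsto> \<ell> ln (1 + e/\<ell>)\<close> turns the sum of the phase bounds
  into \<open>2 OPT + \<gamma>(\<eta>\<^sub>1/OPT) \<eta>\<^sub>1\<close>.
\<close>

type_synonym 'a mp_config = "'a set \<times> 'a set \<times> ('a \<Rightarrow> bool)"

fun forget_cost :: "'a mp_state \<Rightarrow> 'a mp_config" where
  "forget_cost (C, M, pr, c) = (C, M, pr)"

definition mp_config_step :: "nat \<Rightarrow> 'a \<times> bool \<Rightarrow> 'a mp_config \<Rightarrow> 'a mp_config pmf" where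
  "mp_config_step k rp = (\<lambda>(C, M, pr). map_pmf forget_cost (mp_step k rp (C, M, pr, 0)))"

definition reset_marks :: "'a set \<Rightarrow> 'a set \<Rightarrow> 'a set" where
  "reset_marks C M = (if C \<subseteq> M then {} else M)"

definition eviction_candidates :: "'a set \<Rightarrow> 'a set \<Rightarrow> ('a \<Rightarrow> bool) \<Rightarrow> 'a set" where
  "eviction_candidates C M pr =
     (let U = C - reset_marks C M in if {q \<in> U. pr q} \<noteq> {} then {q \<in> U. pr q} else U)"

lemma mp_step_hit: "r \<in> C \<Longrightarrow> mp_step k (r, p) (C, M, pr, c) = return_pmf (C, insert r M, pr(r := p), c)"
  by simp

lemma mp_step_fill:
  "r \<notin> C \<Longrightarrow> card C < k \<Longrightarrow>
    mp_step k (r, p) (C, M, pr, c) = return_pmf (insert r C, insert r M, pr(r := p), Suc c)"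
  by simp

lemma mp_step_evict:
  assumes "r \<notin> C" "\<not> card C < k"
  shows "mp_step k (r, p) (C, M, pr, c) =
    map_pmf (\<lambda>q. (insert r (C - {q}), insert r (reset_marks C M), pr(r := p), Suc c))
      (pmf_of_set (eviction_candidates C M pr))"
  using assms by (simp add: reset_marks_def eviction_candidates_def Let_def)

declare mp_step.simps [simp del]

lemma fst_forget_cost [simp]: "fst (forget_cost s) = fst s"
  by (cases s) simp

lemma map_pmf_forget_cost_mp_step:
  "map_pmf forget_cost (mp_step k rp (C, M, pr, c)) = mp_config_step k rp (C, M, pr)"
  by (cases rp) (simp add: mp_config_step_def mp_step.simps Let_def map_pmf_comp)

lemma mp_config_step_hit:
  "r \<in> C \<Longrightarrow> mp_config_step k (r, p) (C, M, pr) = return_pmf (C, insert r M, pr(r := p))"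
  by (simp add: mp_config_step_def mp_step_hit)

lemma mp_config_step_fill:
  "r \<notin> C \<Longrightarrow> card C < k \<Longrightarrow>
    mp_config_step k (r, p) (C, M, pr) = return_pmf (insert r C, insert r M, pr(r := p))"
  by (simp add: mp_config_step_def mp_step_fill)

lemma mp_config_step_evict:
  assumes "r \<notin> C" "\<not> card C < k"
  shows "mp_config_step k (r, p) (C, M, pr) =
    map_pmf (\<lambda>q. (insert r (C - {q}), insert r (reset_marks C M), pr(r := p)))
      (pmf_of_set (eviction_candidates C M pr))"
  unfolding mp_config_step_def using mp_step_evict[OF assms] by (simp add: map_pmf_comp)

lemma mem_eviction_candidates:
  "q \<in> eviction_candidates C M pr \<longleftrightarrow>
    q \<in> C - reset_marks C M \<and> (pr q \<or> (\<forall>x \<in> C - reset_marks C M. \<not> pr x))"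
  unfolding eviction_candidates_def Let_def by auto

lemma full_cache_nonempty:
  assumes "\<not> card C < k" "k \<ge> 1"
  shows "finite C" "C \<noteq> {}"
  using assms by (auto intro: card_ge_0_finite)

lemma eviction_candidates_nonempty:
  assumes "C \<noteq> {}"
  shows "eviction_candidates C M pr \<noteq> {}"
proof -
  have "C - reset_marks C M \<noteq> {}" using assms by (auto simp: reset_marks_def)
  then show ?thesis unfolding eviction_candidates_def Let_def by auto
qed

lemma finite_eviction_candidates: "finite C \<Longrightarrow> finite (eviction_candidates C M pr)"
  by (rule finite_subset[of _ C]) (auto simp: mem_eviction_candidates)

lemma set_pmf_mp_config_step_evict:
  assumes "r \<notin> C" "\<not> card C < k" "k \<ge> 1"
  shows "set_pmf (mp_config_step k (r, p) (C, M, pr)) =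
    (\<lambda>q. (insert r (C - {q}), insert r (reset_marks C M), pr(r := p))) ` eviction_candidates C M pr"
  using mp_config_step_evict[OF assms(1,2)] full_cache_nonempty[OF assms(2,3)]
  by (simp add: eviction_candidates_nonempty finite_eviction_candidates)

lemma finite_set_pmf_mp_step:
  assumes "k \<ge> 1"
  shows "finite (set_pmf (mp_step k (r, p) (C, M, pr, c)))"
proof (cases "r \<in> C \<or> card C < k")
  case True
  then show ?thesis by (cases "r \<in> C") (auto simp: mp_step_hit mp_step_fill)
next
  case False
  then have "finite C" "C \<noteq> {}"
    using full_cache_nonempty[of C k] assms by blast+
  then show ?thesis
    using False by (simp add: mp_step_evict finite_eviction_candidates eviction_candidates_nonempty)
qed

lemma finite_set_pmf_mp_config_step:
  assumes "k \<ge> 1"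
  shows "finite (set_pmf (mp_config_step k (r, p) (C, M, pr)))"
  unfolding map_pmf_forget_cost_mp_step[of k "(r, p)" C M pr 0, symmetric] set_map_pmf
  by (rule finite_imageI[OF finite_set_pmf_mp_step[OF assms]])

lemma expectation_mp_step:
  assumes "k \<ge> 1"
  shows "measure_pmf.expectation (mp_step k (r, p) (C, M, pr, c)) (\<lambda>s. real (snd (snd (snd s))))
     = real c + (if r \<in> C then 0 else 1)"
proof (cases "r \<in> C \<or> card C < k")
  case True
  then show ?thesis by (cases "r \<in> C") (auto simp: mp_step_hit mp_step_fill)
next
  case False
  then show ?thesis
    using full_cache_nonempty[of C k] assms mp_step_evict[of r C k p M pr c]
    by (simp add: eviction_candidates_nonempty finite_eviction_candidates)
qed

fun rename_config :: "('a \<Rightarrow> 'a) \<Rightarrow> 'a mp_config \<Rightarrow> 'a mp_config" where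
  "rename_config \<sigma> (C, M, pr) = (\<sigma> ` C, \<sigma> ` M, pr)"

lemma eviction_candidates_rename:
  assumes "inj \<sigma>" "\<sigma> ` M = M" "\<And>x. pr (\<sigma> x) = pr x"
  shows "reset_marks (\<sigma> ` C) M = reset_marks C M"
    and "eviction_candidates (\<sigma> ` C) M pr = \<sigma> ` eviction_candidates C M pr"
proof -
  have "\<sigma> ` C \<subseteq> M \<longleftrightarrow> C \<subseteq> M"
    using assms(1,2) by (metis inj_image_subset_iff)
  then show reset: "reset_marks (\<sigma> ` C) M = reset_marks C M"
    by (simp add: reset_marks_def)
  have "\<sigma> ` reset_marks C M = reset_marks C M"
    using assms(2) by (simp add: reset_marks_def)
  then have "\<sigma> ` C - reset_marks C M = \<sigma> ` (C - reset_marks C M)"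
    using assms(1) by (metis image_set_diff)
  then show "eviction_candidates (\<sigma> ` C) M pr = \<sigma> ` eviction_candidates C M pr"
    unfolding eviction_candidates_def Let_def reset using assms(3) by auto
qed

lemma mp_config_step_rename:
  assumes "inj \<sigma>" "\<sigma> r = r" "\<sigma> ` M = M" "\<And>x. pr (\<sigma> x) = pr x" "k \<ge> 1"
  shows "mp_config_step k (r, p) (\<sigma> ` C, M, pr) =
    map_pmf (rename_config \<sigma>) (mp_config_step k (r, p) (C, M, pr))"
proof -
  have r_mem: "r \<in> \<sigma> ` C \<longleftrightarrow> r \<in> C"
    using assms(1,2) by (metis inj_image_mem_iff)
  have card_eq: "card (\<sigma> ` C) = card C"
    using assms(1) by (simp add: card_image inj_on_subset)
  have marks: "\<sigma> ` insert r M = insert r M" "\<sigma> ` insert r (reset_marks C M) = insert r (reset_marks C M)"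
    using assms(2,3) by (auto simp: reset_marks_def)
  show ?thesis
  proof (cases "r \<in> C \<or> card C < k")
    case True
    then show ?thesis
      using r_mem card_eq marks assms(2) by (auto simp: mp_config_step_hit mp_config_step_fill)
  next
    case False
    let ?E = "eviction_candidates C M pr"
    have E: "finite ?E" "?E \<noteq> {}"
      using full_cache_nonempty[of C k] False assms(5)
      by (auto simp: eviction_candidates_nonempty finite_eviction_candidates)
    have "pmf_of_set (\<sigma> ` ?E) = map_pmf \<sigma> (pmf_of_set ?E)"
      using E assms(1) by (simp add: map_pmf_of_set_inj inj_on_subset)
    moreover have "\<sigma> ` (C - {q}) = \<sigma> ` C - {\<sigma> q}" for q
      using assms(1) by (simp add: image_set_diff)
    moreover have "reset_marks (\<sigma> ` C) M = reset_marks C M"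
      and "eviction_candidates (\<sigma> ` C) M pr = \<sigma> ` ?E"
      using eviction_candidates_rename[where pr=pr, OF assms(1,3,4)] by blast+
    ultimately show ?thesis
      using False r_mem card_eq marks assms(2) by (simp add: mp_config_step_evict map_pmf_comp)
  qed
qed

section \<open>Shapes of the configuration distribution\<close>

fun shape_step :: "nat \<Rightarrow> 'a \<Rightarrow> 'a set \<times> 'a set \<times> nat \<Rightarrow> 'a set \<times> 'a set \<times> nat" where
  "shape_step k r (M, U, h) =
    (if r \<in> M then (M, U, h)
     else if r \<in> U \<and> h < card U then (insert r M, U - {r}, h)
     else if card M + card U - h < k then (insert r M, U, h)
     else if h < card U then (insert r M, U, Suc h)
     else ({r}, M, 1))"

fun shape_wf :: "nat \<Rightarrow> 'a set \<times> 'a set \<times> nat \<Rightarrow> bool" where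
  "shape_wf k (M, U, h) \<longleftrightarrow> finite M \<and> finite U \<and> M \<inter> U = {} \<and> h \<le> card U \<and>
     card M + card U - h \<le> k \<and> (U \<noteq> {} \<longrightarrow> card M + card U - h = k)"

text \<open>\<open>S\<close> is the set of evicted pages of \<open>U\<close>; the disjunction says that 1-pages go first.\<close>

fun fits_shape :: "'a set \<times> 'a set \<times> nat \<Rightarrow> ('a \<Rightarrow> bool) \<Rightarrow> 'a mp_config \<Rightarrow> bool" where
  "fits_shape (M, U, h) pr (C, M', pr') \<longleftrightarrow> M' = M \<and> pr' = pr \<and>
     (\<exists>S \<subseteq> U. card S = h \<and> (S \<subseteq> {q \<in> U. pr q} \<or> {q \<in> U. pr q} \<subseteq> S) \<and> C = M \<union> (U - S))"

fun shape_dist :: "'a set \<times> 'a set \<times> nat \<Rightarrow> ('a \<Rightarrow> bool) \<Rightarrow> 'a mp_config pmf \<Rightarrow> bool" where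
  "shape_dist (M, U, h) pr D \<longleftrightarrow> finite (set_pmf D) \<and> (\<forall>s \<in> set_pmf D. fits_shape (M, U, h) pr s) \<and>
     (\<forall>\<sigma>. \<sigma> permutes U \<and> (\<forall>x. pr (\<sigma> x) = pr x) \<longrightarrow> map_pmf (rename_config \<sigma>) D = D)"

lemma shape_wf_shape_step:
  assumes "k \<ge> 1" "shape_wf k (M, U, h)"
  shows "shape_wf k (shape_step k r (M, U, h))"
proof -
  have fin: "finite M" "finite U" "M \<inter> U = {}" "h \<le> card U" and size: "card M + card U - h \<le> k"
    and full: "U \<noteq> {} \<Longrightarrow> card M + card U - h = k"
    using assms(2) by auto
  consider (marked) "r \<in> M"
    | (unmarked) "r \<notin> M" "r \<in> U" "h < card U"
    | (fill) "r \<notin> M" "\<not> (r \<in> U \<and> h < card U)" "card M + card U - h < k"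
    | (evict) "r \<notin> M" "\<not> (r \<in> U \<and> h < card U)" "\<not> card M + card U - h < k" "h < card U"
    | (new_phase) "r \<notin> M" "\<not> card M + card U - h < k" "\<not> h < card U"
    by blast
  then show ?thesis
  proof cases
    case marked
    then show ?thesis using assms(2) by simp
  next
    case unmarked
    then show ?thesis using fin full by (auto simp: card_insert_if)
  next
    case fill
    then have "U = {}" using full by auto
    then show ?thesis using fill fin by (auto simp: card_insert_if)
  next
    case evict
    then have "U \<noteq> {}" by auto
    then show ?thesis using evict fin full by (auto simp: card_insert_if)
  next
    case new_phase
    then have "card M = k" using fin size by auto
    then show ?thesis using new_phase fin assms(1) by (auto simp: card_gt_0_iff Suc_le_eq)
  qed
qed

lemma fits_shapeI:
  assumes "S \<subseteq> U" "card S = h" "S \<subseteq> {x \<in> U. pr x} \<or> {x \<in> U. pr x} \<subseteq> S" "C = M \<union> (U - S)"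
  shows "fits_shape (M, U, h) pr (C, M, pr)"
  using assms by auto

lemma fits_shape_step_evict_unmarked:
  assumes "k \<ge> 1" and S: "S \<subseteq> U" "S \<subseteq> {x \<in> U. pr x} \<or> {x \<in> U. pr x} \<subseteq> S"
    and disj: "M \<inter> U = {}"
    and miss: "r \<notin> M \<union> (U - S)" "S \<noteq> U" "\<not> card (M \<union> (U - S)) < k"
    and s': "s' \<in> set_pmf (mp_config_step k (r, p) (M \<union> (U - S), M, pr))"
  obtains q where "q \<in> U - S"
    and "fits_shape (insert r M, U - {r}, card (insert q (S - {r}))) (pr(r := p)) s'"
proof -
  let ?C = "M \<union> (U - S)"
  have "\<not> ?C \<subseteq> M" "?C - M = U - S" using miss(2) S(1) disj by auto
  then have "reset_marks ?C M = M" by (simp add: reset_marks_def)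
  then obtain q where q: "q \<in> U - S" "pr q \<or> (\<forall>x \<in> U - S. \<not> pr x)"
    and s'_eq: "s' = (insert r (?C - {q}), insert r M, pr(r := p))"
    using s' miss(1,3) assms(1) \<open>?C - M = U - S\<close>
    by (auto simp: set_pmf_mp_config_step_evict mem_eviction_candidates)
  let ?S' = "insert q (S - {r})"
  have "fits_shape (insert r M, U - {r}, card ?S') (pr(r := p)) s'"
    unfolding s'_eq
  proof (rule fits_shapeI)
    have "insert q S \<subseteq> {x \<in> U. pr x} \<or> {x \<in> U. pr x} \<subseteq> insert q S"
      using S(2) q by blast
    moreover have "q \<noteq> r" using q(1) miss(1) by blast
    ultimately show "?S' \<subseteq> {x \<in> U - {r}. (pr(r := p)) x} \<or> {x \<in> U - {r}. (pr(r := p)) x} \<subseteq> ?S'"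
      by auto
    show "?S' \<subseteq> U - {r}" using S(1) q miss(1) by auto
    show "insert r (?C - {q}) = insert r M \<union> (U - {r} - ?S')" using q disj by auto
  qed simp
  then show ?thesis using q(1) that by blast
qed

lemma fits_shape_step_new_phase:
  assumes "k \<ge> 1" "r \<notin> M" "\<not> card M < k" "s' \<in> set_pmf (mp_config_step k (r, p) (M, M, pr))"
  shows "fits_shape ({r}, M, 1) (pr(r := p)) s'"
proof -
  obtain q where q: "q \<in> M" "pr q \<or> (\<forall>x \<in> M. \<not> pr x)"
    and s': "s' = (insert r (M - {q}), {r}, pr(r := p))"
    using assms by (auto simp: set_pmf_mp_config_step_evict mem_eviction_candidates reset_marks_def)
  show ?thesis
    unfolding s'
  proof (rule fits_shapeI)
    show "{q} \<subseteq> {x \<in> M. (pr(r := p)) x} \<or> {x \<in> M. (pr(r := p)) x} \<subseteq> {q}"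
      using q assms(2) by auto
  qed (use q assms(2) in auto)
qed

lemma fits_shape_step_hit:
  assumes "finite U" "M \<inter> U = {}" "S \<subseteq> U" "S \<subseteq> {x \<in> U. pr x} \<or> {x \<in> U. pr x} \<subseteq> S"
    and "r \<in> M \<union> (U - S)"
  shows "fits_shape (shape_step k r (M, U, card S)) (pr(r := p)) (M \<union> (U - S), insert r M, pr(r := p))"
proof (cases "r \<in> M")
  case True
  then have "{x \<in> U. (pr(r := p)) x} = {x \<in> U. pr x}" using assms(2) by auto
  then have "fits_shape (M, U, card S) (pr(r := p)) (M \<union> (U - S), M, pr(r := p))"
    using assms(3,4) by (intro fits_shapeI) simp_all
  then show ?thesis using True by (simp add: insert_absorb del: fits_shape.simps)
next
  case False
  then have "r \<in> U" "r \<notin> S" "card S < card U"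
    using assms(1,3,5) psubset_card_mono[of U S] by auto
  moreover have "S \<subseteq> {x \<in> U - {r}. (pr(r := p)) x} \<or> {x \<in> U - {r}. (pr(r := p)) x} \<subseteq> S"
    using assms(4) \<open>r \<notin> S\<close> by auto
  then have "fits_shape (insert r M, U - {r}, card S) (pr(r := p)) (M \<union> (U - S), insert r M, pr(r := p))"
    using assms(3) \<open>r \<in> U\<close> \<open>r \<notin> S\<close> by (intro fits_shapeI) auto
  ultimately show ?thesis using False by (simp del: fits_shape.simps)
qed

lemma card_shape_cache:
  assumes "finite M" "finite U" "M \<inter> U = {}" "S \<subseteq> U"
  shows "card (M \<union> (U - S)) = card M + card U - card S"
proof -
  have "card (M \<union> (U - S)) = card M + card (U - S)" using assms by (intro card_Un_disjoint) auto
  then show ?thesis using assms card_mono[OF assms(2,4)] by (simp add: card_Diff_subset finite_subset)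
qed

lemma fits_shape_step_miss_partial:
  assumes "k \<ge> 1" "shape_wf k (M, U, card S)"
    and S: "S \<subseteq> U" "S \<subseteq> {x \<in> U. pr x} \<or> {x \<in> U. pr x} \<subseteq> S" "S \<noteq> U"
    and miss: "r \<notin> M \<union> (U - S)"
    and s': "s' \<in> set_pmf (mp_config_step k (r, p) (M \<union> (U - S), M, pr))"
  shows "fits_shape (shape_step k r (M, U, card S)) (pr(r := p)) s'"
proof -
  have fin: "finite M" "finite U" "M \<inter> U = {}" "finite S"
    and full: "U \<noteq> {} \<Longrightarrow> card M + card U - card S = k"
    using assms(2) S(1) finite_subset by auto
  have less: "card S < card U" using psubset_card_mono[OF fin(2)] S(1,3) by blast
  then have "U \<noteq> {}" by auto
  then have "\<not> card (M \<union> (U - S)) < k" using card_shape_cache[OF fin(1-3) S(1)] full by simp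
  then obtain q where q: "q \<in> U - S"
    and fits: "fits_shape (insert r M, U - {r}, card (insert q (S - {r}))) (pr(r := p)) s'"
    using fits_shape_step_evict_unmarked[OF assms(1) S(1,2) fin(3) miss S(3) _ s'] by blast
  show ?thesis
  proof (cases "r \<in> U")
    case True
    then have "r \<in> S" using miss by blast
    then have "card (insert q (S - {r})) = card S"
      using q fin(4) card_gt_0_iff[of S] by (auto simp: card_Diff_singleton)
    then show ?thesis using fits True less miss by simp
  next
    case False
    then have "S - {r} = S" "U - {r} = U" using S(1) by auto
    then show ?thesis using fits False less miss q fin(4) full by auto
  qed
qed

lemma fits_shape_step_miss_complete:
  assumes "k \<ge> 1" "shape_wf k (M, U, card U)" "r \<notin> M"
    and s': "s' \<in> set_pmf (mp_config_step k (r, p) (M, M, pr))"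
  shows "fits_shape (shape_step k r (M, U, card U)) (pr(r := p)) s'"
proof (cases "card M < k")
  case True
  then have "U = {}" using assms(2) by auto
  moreover have "s' = (insert r M, insert r M, pr(r := p))"
    using s' True assms(3) by (simp add: mp_config_step_fill)
  ultimately show ?thesis using True assms(3) by (auto intro!: fits_shapeI)
next
  case False
  then have "fits_shape ({r}, M, 1) (pr(r := p)) s'"
    using fits_shape_step_new_phase[OF assms(1,3)] s' by simp
  then show ?thesis using False assms(3) by (simp del: fits_shape.simps)
qed

lemma fits_shape_step:
  assumes "k \<ge> 1" "shape_wf k (M, U, h)" "fits_shape (M, U, h) pr s"
    and "s' \<in> set_pmf (mp_config_step k (r, p) s)"
  shows "fits_shape (shape_step k r (M, U, h)) (pr(r := p)) s'"
proof -
  obtain C S where s: "s = (C, M, pr)" and S: "S \<subseteq> U" "card S = h"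
    "S \<subseteq> {x \<in> U. pr x} \<or> {x \<in> U. pr x} \<subseteq> S" and C: "C = M \<union> (U - S)"
    using assms(3) by (cases s) auto
  have fin: "finite U" "M \<inter> U = {}" using assms(2) by auto
  consider "r \<in> C" | "r \<notin> C" "S \<noteq> U" | "r \<notin> C" "S = U" by blast
  then show ?thesis
  proof cases
    case 1
    then show ?thesis
      using assms(4) fits_shape_step_hit[OF fin S(1,3), of r k p] s C S(2) by (simp add: mp_config_step_hit)
  next
    case 2
    then show ?thesis
      using fits_shape_step_miss_partial[OF assms(1) _ S(1,3)] assms(2,4) s C S(2) by simp
  next
    case 3
    then have "C = M" "r \<notin> M" "h = card U" using C S(2) by auto
    then show ?thesis using fits_shape_step_miss_complete[OF assms(1), of M U r s' p pr] assms(2,4) s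
      by (simp del: shape_step.simps shape_wf.simps)
  qed
qed

lemma shape_step_unmarked:
  assumes "shape_wf k (M, U, h)" "shape_step k r (M, U, h) = (M', U', h')"
  shows "r \<notin> U'" "U' \<subseteq> U \<or> (U' = M \<and> h = card U)"
proof -
  have "M \<inter> U = {}" "h \<le> card U" "U \<noteq> {} \<Longrightarrow> card M + card U - h = k"
    using assms(1) by auto
  then have "r \<notin> U' \<and> (U' \<subseteq> U \<or> (U' = M \<and> h = card U))"
    using assms(2) by (auto split: if_splits)
  then show "r \<notin> U'" "U' \<subseteq> U \<or> (U' = M \<and> h = card U)" by auto
qed

lemma map_bind_pmf_equivariant:
  assumes "map_pmf f D = D" "\<And>s. s \<in> set_pmf D \<Longrightarrow> map_pmf f (K s) = K (f s)"
  shows "map_pmf f (bind_pmf D K) = bind_pmf D K"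
proof -
  have "map_pmf f (bind_pmf D K) = bind_pmf D (\<lambda>s. K (f s))"
    unfolding map_bind_pmf using assms(2) by (rule bind_pmf_cong[OF refl])
  also have "\<dots> = bind_pmf (map_pmf f D) K" by (simp add: bind_map_pmf)
  finally show ?thesis using assms(1) by simp
qed

lemma permutes_next_unmarked:
  assumes "shape_wf k (M, U, h)" "shape_step k r (M, U, h) = (M', U', h')"
    and \<sigma>: "\<sigma> permutes U'" "\<And>x. (pr(r := p)) (\<sigma> x) = (pr(r := p)) x"
  shows "\<sigma> r = r" and "pr (\<sigma> x) = pr x" and "\<sigma> ` M = M"
proof -
  show fixes_r: "\<sigma> r = r" using permutes_not_in[OF \<sigma>(1) shape_step_unmarked(1)[OF assms(1,2)]] .
  show "pr (\<sigma> x) = pr x"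
  proof (cases "x = r")
    case False
    then have "\<sigma> x \<noteq> r" using fixes_r permutes_inj[OF \<sigma>(1)] by (metis injD)
    then show ?thesis using \<sigma>(2)[of x] False by simp
  qed (simp add: fixes_r)
  have "M \<inter> U = {}" using assms(1) by simp
  then show "\<sigma> ` M = M"
    using shape_step_unmarked(2)[OF assms(1,2)] permutes_not_in[OF \<sigma>(1)] permutes_image[OF \<sigma>(1)]
    by (cases "U' \<subseteq> U") force+
qed

lemma shape_dist_step_rename:
  assumes "k \<ge> 1" "shape_wf k (M, U, h)" "shape_dist (M, U, h) pr D"
    and step: "shape_step k r (M, U, h) = (M', U', h')"
    and \<sigma>: "\<sigma> permutes U'" "\<And>x. (pr(r := p)) (\<sigma> x) = (pr(r := p)) x"
  shows "map_pmf (rename_config \<sigma>) (bind_pmf D (mp_config_step k (r, p))) =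
    bind_pmf D (mp_config_step k (r, p))"
proof (rule map_bind_pmf_equivariant)
  note \<sigma>_props = permutes_next_unmarked[OF assms(2) step \<sigma>]
  have fits: "\<And>s. s \<in> set_pmf D \<Longrightarrow> fits_shape (M, U, h) pr s"
    and inv: "\<And>\<tau>. \<tau> permutes U \<Longrightarrow> \<forall>x. pr (\<tau> x) = pr x \<Longrightarrow> map_pmf (rename_config \<tau>) D = D"
    using assms(3) by simp_all
  have U': "U' \<subseteq> U \<or> (U' = M \<and> h = card U)" by (rule shape_step_unmarked(2)[OF assms(2) step])
  show "map_pmf (rename_config \<sigma>) D = D"
  proof (cases "U' \<subseteq> U")
    case True
    then show ?thesis using inv permutes_subset[OF \<sigma>(1)] \<sigma>_props(2) by blast
  next
    case False
    have "rename_config \<sigma> s = s" if s: "s \<in> set_pmf D" for s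
    proof -
      obtain C S where "s = (C, M, pr)" "S \<subseteq> U" "card S = h" "C = M \<union> (U - S)"
        using fits[OF s] by (cases s) auto
      moreover have "S = U" using calculation False U' assms(2) by (simp add: card_subset_eq)
      ultimately show ?thesis using \<sigma>_props(3) by simp
    qed
    then show ?thesis by (rule map_pmf_idI)
  qed
  fix s assume "s \<in> set_pmf D"
  then obtain C where "s = (C, M, pr)" using fits by (cases s) auto
  then show "map_pmf (rename_config \<sigma>) (mp_config_step k (r, p) s) =
      mp_config_step k (r, p) (rename_config \<sigma> s)"
    using mp_config_step_rename[where pr = pr, OF permutes_inj[OF \<sigma>(1)] \<sigma>_props(1,3) \<sigma>_props(2) assms(1)]
      \<sigma>_props(3)
    by simp
qed

lemma shape_dist_step:
  assumes "k \<ge> 1" "shape_wf k (M, U, h)" "shape_dist (M, U, h) pr D"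
  shows "shape_dist (shape_step k r (M, U, h)) (pr(r := p)) (bind_pmf D (mp_config_step k (r, p)))"
proof -
  obtain M' U' h' where step: "shape_step k r (M, U, h) = (M', U', h')" by (metis prod_cases3)
  have "finite (set_pmf (bind_pmf D (mp_config_step k (r, p))))"
    using assms(1,3) finite_set_pmf_mp_config_step by auto
  moreover have "fits_shape (M', U', h') (pr(r := p)) s'"
    if s': "s' \<in> set_pmf (bind_pmf D (mp_config_step k (r, p)))" for s'
  proof -
    obtain s where s: "s \<in> set_pmf D" "s' \<in> set_pmf (mp_config_step k (r, p) s)"
      using s' by auto
    have "fits_shape (M, U, h) pr s" using assms(3) s(1) by simp
    then show ?thesis using fits_shape_step[OF assms(1,2) _ s(2)] unfolding step by blast
  qed
  ultimately show ?thesis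
    using shape_dist_step_rename[OF assms step] step by (simp del: fits_shape.simps)
qed

section \<open>Fault probabilities\<close>

lemma fst_rename_config [simp]: "fst (rename_config \<sigma> s) = \<sigma> ` fst s"
  by (cases s) simp

lemma prob_missing_uniform:
  assumes "finite (set_pmf D)" "finite X" "x \<in> X"
    and swap: "\<And>y. y \<in> X \<Longrightarrow> map_pmf (rename_config (Transposition.transpose x y)) D = D"
    and missing: "\<And>s. s \<in> set_pmf D \<Longrightarrow> card (X - fst s) = v"
  shows "measure_pmf.prob D {s. x \<notin> fst s} = v / card X"
proof -
  define P where "P y = measure_pmf.prob D {s. y \<notin> fst s}" for y
  have same: "P y = P x" if "y \<in> X" for y
  proof -
    have "P y = measure_pmf.prob (map_pmf (rename_config (Transposition.transpose x y)) D) {s. y \<notin> fst s}"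
      unfolding P_def swap[OF that] ..
    also have "\<dots> = measure_pmf.prob D {s. y \<notin> Transposition.transpose x y ` fst s}"
      by (simp add: vimage_def)
    also have "{s. y \<notin> Transposition.transpose x y ` fst s} = {s. x \<notin> fst s}"
      by (auto simp: in_transpose_image_iff)
    finally show ?thesis unfolding P_def .
  qed
  have "(\<Sum>y\<in>X. P y) = measure_pmf.expectation D (\<lambda>s. \<Sum>y\<in>X. indicator {s. y \<notin> fst s} s)"
    unfolding P_def using assms(1)
    by (subst Bochner_Integration.integral_sum) (auto intro: integrable_measure_pmf_finite)
  also have "\<dots> = measure_pmf.expectation D (\<lambda>s. real v)"
    using missing assms(2)
    by (intro integral_cong_AE) (auto simp: AE_measure_pmf_iff indicator_def sum.If_cases set_diff_eq Int_def)
  finally have "real (card X) * P x = v" using same by simp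
  moreover have "card X > 0" using assms(2,3) card_gt_0_iff by blast
  ultimately show ?thesis unfolding P_def by (simp add: field_simps)
qed

lemma card_missing_pages:
  assumes "shape_wf k (M, U, h)" "fits_shape (M, U, h) pr s"
  shows "card ({q \<in> U. pr q} - fst s) = min h (card {q \<in> U. pr q})"
    and "card ({q \<in> U. \<not> pr q} - fst s) = h - min h (card {q \<in> U. pr q})"
proof -
  have fin: "finite M" "finite U" "M \<inter> U = {}" using assms(1) by auto
  obtain S where S: "S \<subseteq> U" "card S = h" "S \<subseteq> {q \<in> U. pr q} \<or> {q \<in> U. pr q} \<subseteq> S"
    and C: "fst s = M \<union> (U - S)"
    using assms(2) by (cases s) auto
  have fin_S: "finite S" and fin_U1: "finite {q \<in> U. pr q}" using S(1) fin(2) finite_subset by auto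
  have ones: "{q \<in> U. pr q} - fst s = {q \<in> U. pr q} \<inter> S"
    and zeros: "{q \<in> U. \<not> pr q} - fst s = S - {q \<in> U. pr q}"
    using C fin(3) S(1) by auto
  from S(3) show "card ({q \<in> U. pr q} - fst s) = min h (card {q \<in> U. pr q})"
    using card_mono[OF fin_S] card_mono[OF fin_U1] S(2)
    by (auto simp: ones Int_absorb1 Int_absorb2)
  from S(3) show "card ({q \<in> U. \<not> pr q} - fst s) = h - min h (card {q \<in> U. pr q})"
  proof
    assume "S \<subseteq> {q \<in> U. pr q}"
    then have none: "{q \<in> U. \<not> pr q} - fst s = {}" and "h \<le> card {q \<in> U. pr q}"
      using zeros card_mono[OF fin_U1] S(2) by auto
    then show ?thesis by (simp only: none card.empty min.absorb1 diff_self_eq_0)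
  next
    assume "{q \<in> U. pr q} \<subseteq> S"
    then show ?thesis using card_mono[OF fin_S] S(2) fin_U1 by (simp add: zeros card_Diff_subset)
  qed
qed

lemma prob_fault_marked:
  assumes "shape_dist (M, U, h) pr D" "r \<in> M"
  shows "measure_pmf.prob D {s. r \<notin> fst s} = 0"
proof -
  have "r \<in> fst s" if "s \<in> set_pmf D" for s
    using assms that by (cases s) auto
  then show ?thesis by (subst measure_pmf_zero_iff) auto
qed

lemma shape_dist_transpose:
  assumes "shape_dist (M, U, h) pr D" "x \<in> U" "y \<in> U" "pr x = pr y"
  shows "map_pmf (rename_config (Transposition.transpose x y)) D = D"
proof -
  have "\<forall>z. pr (Transposition.transpose x y z) = pr z"
    using assms(4) by (simp add: Transposition.transpose_def)
  then show ?thesis using assms(1) permutes_swap_id[OF assms(2,3)] by simp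
qed

lemma prob_fault_1page:
  assumes "shape_wf k (M, U, h)" "shape_dist (M, U, h) pr D" "r \<in> U" "pr r"
  shows "measure_pmf.prob D {s. r \<notin> fst s} = min h (card {q \<in> U. pr q}) / card {q \<in> U. pr q}"
proof (rule prob_missing_uniform)
  show "finite (set_pmf D)" using assms(2) by simp
  show "finite {q \<in> U. pr q}" using assms(1) by simp
  show "map_pmf (rename_config (Transposition.transpose r y)) D = D" if "y \<in> {q \<in> U. pr q}" for y
    using shape_dist_transpose[OF assms(2,3)] that assms(4) by simp
  show "card ({q \<in> U. pr q} - fst s) = min h (card {q \<in> U. pr q})" if "s \<in> set_pmf D" for s
    using card_missing_pages(1)[OF assms(1)] assms(2) that by simp
qed (use assms(3,4) in simp)

lemma prob_fault_0page:
  assumes "shape_wf k (M, U, h)" "shape_dist (M, U, h) pr D" "r \<in> U" "\<not> pr r"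
  shows "measure_pmf.prob D {s. r \<notin> fst s} =
    (h - min h (card {q \<in> U. pr q})) / card {q \<in> U. \<not> pr q}"
proof (rule prob_missing_uniform)
  show "finite (set_pmf D)" using assms(2) by simp
  show "finite {q \<in> U. \<not> pr q}" using assms(1) by simp
  show "map_pmf (rename_config (Transposition.transpose r y)) D = D" if "y \<in> {q \<in> U. \<not> pr q}" for y
    using shape_dist_transpose[OF assms(2,3)] that assms(4) by simp
  show "card ({q \<in> U. \<not> pr q} - fst s) = h - min h (card {q \<in> U. pr q})" if "s \<in> set_pmf D" for s
    using card_missing_pages(2)[OF assms(1)] assms(2) that by simp
qed (use assms(3,4) in simp)

primrec config_dist :: "nat \<Rightarrow> 'a list \<Rightarrow> bool list \<Rightarrow> nat \<Rightarrow> 'a mp_config pmf" where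
  "config_dist k rs ps 0 = return_pmf ({}, {}, \<lambda>_. False)"
| "config_dist k rs ps (Suc i) = bind_pmf (config_dist k rs ps i) (mp_config_step k (rs ! i, ps ! i))"

primrec latest_pred :: "'a list \<Rightarrow> bool list \<Rightarrow> nat \<Rightarrow> 'a \<Rightarrow> bool" where
  "latest_pred rs ps 0 = (\<lambda>_. False)"
| "latest_pred rs ps (Suc i) = (latest_pred rs ps i)(rs ! i := ps ! i)"

primrec shape_after :: "nat \<Rightarrow> 'a list \<Rightarrow> nat \<Rightarrow> 'a set \<times> 'a set \<times> nat" where
  "shape_after k rs 0 = ({}, {}, 0)"
| "shape_after k rs (Suc i) = shape_step k (rs ! i) (shape_after k rs i)"

definition fault_prob :: "nat \<Rightarrow> 'a list \<Rightarrow> bool list \<Rightarrow> nat \<Rightarrow> real" where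
  "fault_prob k rs ps i = measure_pmf.prob (config_dist k rs ps i) {s. rs ! i \<notin> fst s}"

lemma shape_dist_config_dist:
  assumes "k \<ge> 1"
  shows "shape_wf k (shape_after k rs i) \<and>
    shape_dist (shape_after k rs i) (latest_pred rs ps i) (config_dist k rs ps i)"
proof (induction i)
  case 0
  have "map_pmf (rename_config \<sigma>) (return_pmf ({}, {}, \<lambda>_. False)) = return_pmf ({}, {}, \<lambda>_. False)"
    for \<sigma> :: "'a \<Rightarrow> 'a"
    by simp
  then show ?case by simp
next
  case (Suc i)
  obtain M U h where sh: "shape_after k rs i = (M, U, h)" by (metis prod_cases3)
  have wf: "shape_wf k (M, U, h)"
    and dist: "shape_dist (M, U, h) (latest_pred rs ps i) (config_dist k rs ps i)"
    using Suc.IH unfolding sh by blast+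
  show ?case
    unfolding shape_after.simps latest_pred.simps config_dist.simps sh
    using shape_wf_shape_step[OF assms wf] shape_dist_step[OF assms wf dist] by blast
qed

lemma mp_run_take_Suc:
  assumes "i < length rs" "length ps = length rs"
  shows "mp_run k (take (Suc i) rs) (take (Suc i) ps) =
    bind_pmf (mp_run k (take i rs) (take i ps)) (mp_step k (rs ! i, ps ! i))"
  using assms by (simp add: mp_run_def take_Suc_conv_app_nth)

lemma map_pmf_forget_cost_mp_run:
  assumes "i \<le> length rs" "length ps = length rs"
  shows "map_pmf forget_cost (mp_run k (take i rs) (take i ps)) = config_dist k rs ps i"
  using assms(1)
proof (induction i)
  case 0
  then show ?case by (simp add: mp_run_def)
next
  case (Suc i)
  have step: "map_pmf forget_cost (mp_step k (rs ! i, ps ! i) s) =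
      mp_config_step k (rs ! i, ps ! i) (forget_cost s)" for s :: "'a mp_state"
    by (cases s) (simp only: map_pmf_forget_cost_mp_step forget_cost.simps)
  have "map_pmf forget_cost (mp_run k (take (Suc i) rs) (take (Suc i) ps)) =
      bind_pmf (mp_run k (take i rs) (take i ps)) (\<lambda>s. mp_config_step k (rs ! i, ps ! i) (forget_cost s))"
    using Suc.prems by (simp add: mp_run_take_Suc assms(2) map_bind_pmf step)
  also have "\<dots> = config_dist k rs ps (Suc i)"
    using Suc by (simp add: bind_map_pmf[symmetric])
  finally show ?case .
qed

lemma finite_set_pmf_mp_run_take:
  assumes "k \<ge> 1" "i \<le> length rs" "length ps = length rs"
  shows "finite (set_pmf (mp_run k (take i rs) (take i ps)))"
  using assms(2)
proof (induction i)
  case 0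
  then show ?case by (simp add: mp_run_def)
next
  case (Suc i)
  have "finite (set_pmf (mp_step k (rs ! i, ps ! i) s))" for s
    using finite_set_pmf_mp_step[OF assms(1)] by (cases s) simp
  then show ?case using Suc by (simp add: mp_run_take_Suc assms(3))
qed

lemma expectation_bind_mp_step:
  assumes "k \<ge> 1" "finite (set_pmf D)"
  shows "measure_pmf.expectation (bind_pmf D (mp_step k (r, p))) (\<lambda>s. real (snd (snd (snd s))))
     = measure_pmf.expectation D (\<lambda>s. real (snd (snd (snd s))))
       + measure_pmf.prob (map_pmf forget_cost D) {s. r \<notin> fst s}"
proof -
  let ?c = "\<lambda>s :: 'a mp_state. real (snd (snd (snd s)))"
  have step: "measure_pmf.expectation (mp_step k (r, p) s) ?c = ?c s + indicator {s. r \<notin> fst s} s" for s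
    by (cases s) (simp add: expectation_mp_step[OF assms(1)] indicator_def)
  have "measure_pmf.expectation (bind_pmf D (mp_step k (r, p))) ?c
      = (\<Sum>s\<in>set_pmf D. pmf D s * measure_pmf.expectation (mp_step k (r, p) s) ?c)"
    using assms finite_set_pmf_mp_step[OF assms(1)]
    by (subst pmf_expectation_bind[OF assms(2)]) (auto simp: split_paired_all)
  also have "\<dots> = measure_pmf.expectation D (\<lambda>s. ?c s + indicator {s. r \<notin> fst s} s)"
    unfolding step by (subst integral_measure_pmf[OF assms(2)]) (auto simp: ac_simps)
  also have "\<dots> = measure_pmf.expectation D ?c + measure_pmf.prob D {s. r \<notin> fst s}"
    using assms(2) by (subst Bochner_Integration.integral_add) (auto intro: integrable_measure_pmf_finite)
  finally show ?thesis by simp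
qed

lemma mp_expected_cost_eq_sum_fault_prob:
  assumes "k \<ge> 1" "length ps = length rs"
  shows "mp_expected_cost k rs ps = (\<Sum>i<length rs. fault_prob k rs ps i)"
proof -
  have "measure_pmf.expectation (mp_run k (take i rs) (take i ps)) (\<lambda>s. real (snd (snd (snd s))))
      = (\<Sum>t<i. fault_prob k rs ps t)" if "i \<le> length rs" for i
    using that
  proof (induction i)
    case 0
    then show ?case by (simp add: mp_run_def)
  next
    case (Suc i)
    have "finite (set_pmf (mp_run k (take i rs) (take i ps)))"
      using Suc.prems assms by (intro finite_set_pmf_mp_run_take) auto
    then show ?case
      using Suc Suc_le_lessD[OF Suc.prems]
      by (simp add: mp_run_take_Suc assms expectation_bind_mp_step[OF assms(1)]
          map_pmf_forget_cost_mp_run fault_prob_def)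
  qed
  from this[of "length rs"] show ?thesis using assms(2) by (simp add: mp_expected_cost_def)
qed

definition pages_between :: "'a list \<Rightarrow> nat \<Rightarrow> nat \<Rightarrow> 'a set" where
  "pages_between xs a b = (\<lambda>t. xs ! t) ` {a..<b}"

lemma pages_between_empty [simp]: "pages_between xs a a = {}"
  by (simp add: pages_between_def)

lemma finite_pages_between [simp]: "finite (pages_between xs a b)"
  by (simp add: pages_between_def)

lemma pages_between_Suc: "a \<le> b \<Longrightarrow> pages_between xs a (Suc b) = insert (xs ! b) (pages_between xs a b)"
  unfolding pages_between_def by (auto simp: atLeastLessThanSuc)

lemma pages_between_split:
  "a \<le> b \<Longrightarrow> b \<le> c \<Longrightarrow> pages_between xs a c = pages_between xs a b \<union> pages_between xs b c"
  unfolding pages_between_def by (metis image_Un ivl_disj_un_two(3))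

lemma set_take_drop_eq_pages_between:
  assumes "b \<le> length xs" "a \<le> b"
  shows "set (take (b - a) (drop a xs)) = pages_between xs a b"
proof -
  have "take (b - a) (drop a xs) = map (\<lambda>t. xs ! t) [a..<b]"
    by (rule nth_equalityI) (use assms in auto)
  then show ?thesis unfolding pages_between_def by simp
qed

lemma next_start:
  assumes "x < length rs"
  shows "x < next_start k rs x" "next_start k rs x \<le> length rs"
    and "\<And>t. x < t \<Longrightarrow> t < next_start k rs x \<Longrightarrow> card (pages_between rs x (Suc t)) \<le> k"
    and "next_start k rs x < length rs \<Longrightarrow> k < card (pages_between rs x (Suc (next_start k rs x)))"
proof -
  define Q where "Q t \<longleftrightarrow> x < t \<and> (t = length rs \<or> k < card (set (take (Suc t - x) (drop x rs))))" for t
  have ns: "next_start k rs x = (LEAST t. Q t)" unfolding next_start_def Q_def using assms by simp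
  have Q_length: "Q (length rs)" unfolding Q_def using assms by simp
  have Q_least: "Q (LEAST t. Q t)" by (rule LeastI[of Q, OF Q_length])
  show "x < next_start k rs x" using Q_least unfolding ns Q_def by simp
  show le: "next_start k rs x \<le> length rs" unfolding ns by (rule Least_le[of Q, OF Q_length])
  show "card (pages_between rs x (Suc t)) \<le> k" if "x < t" "t < next_start k rs x" for t
    using not_less_Least[of t Q] that le set_take_drop_eq_pages_between[of "Suc t" rs x]
    unfolding ns Q_def by auto
  show "k < card (pages_between rs x (Suc (next_start k rs x)))" if "next_start k rs x < length rs"
    using Q_least that set_take_drop_eq_pages_between[of "Suc (next_start k rs x)" rs x]
    unfolding ns Q_def by auto
qed

lemma next_start_beyond: "length rs \<le> x \<Longrightarrow> next_start k rs x = length rs"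
  unfolding next_start_def by simp

lemma phase_start_0 [simp]: "phase_start k rs 0 = 0"
  unfolding phase_start_def by simp

lemma phase_start_Suc: "phase_start k rs (Suc j) = next_start k rs (phase_start k rs j)"
  unfolding phase_start_def by simp

lemma phase_start_le_length: "phase_start k rs j \<le> length rs"
proof (induction j)
  case (Suc j)
  then show ?case
    using next_start(2)[of "phase_start k rs j" rs k]
    by (cases "phase_start k rs j < length rs") (auto simp: phase_start_Suc next_start_beyond)
qed simp

lemma phase_start_less_Suc:
  "phase_start k rs j < length rs \<Longrightarrow> phase_start k rs j < phase_start k rs (Suc j)"
  unfolding phase_start_Suc by (rule next_start(1))

lemma phase_start_le_Suc: "phase_start k rs j \<le> phase_start k rs (Suc j)"
  using phase_start_less_Suc[of k rs j] phase_start_le_length[of k rs j]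
  by (cases "phase_start k rs j < length rs") (auto simp: phase_start_Suc next_start_beyond)

lemma phase_start_mono: "j \<le> j' \<Longrightarrow> phase_start k rs j \<le> phase_start k rs j'"
  by (rule lift_Suc_mono_le[of "phase_start k rs"]) (auto simp: phase_start_le_Suc)

lemma phase_start_ge_index: "j \<le> phase_start k rs j \<or> phase_start k rs j = length rs"
proof (induction j)
  case (Suc j)
  then show ?case
    using phase_start_less_Suc[of k rs j] phase_start_le_length[of k rs j]
    by (cases "phase_start k rs j < length rs") (auto simp: phase_start_Suc next_start_beyond)
qed simp

lemma phase_start_length [simp]: "phase_start k rs (length rs) = length rs"
  using phase_start_ge_index[of "length rs" k rs] phase_start_le_length[of k rs "length rs"] by auto

lemma phase_index_less_length: "phase_start k rs j < length rs \<Longrightarrow> j < length rs"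
  using phase_start_ge_index[of j k rs] by auto

lemma card_phase_prefix_le:
  assumes "k \<ge> 1" "phase_start k rs j \<le> i" "i < phase_start k rs (Suc j)"
  shows "card (pages_between rs (phase_start k rs j) (Suc i)) \<le> k"
proof (cases "i = phase_start k rs j")
  case True
  then show ?thesis using assms(1) by (simp add: pages_between_Suc)
next
  case False
  have "phase_start k rs j < length rs"
    using assms(2,3) phase_start_le_length[of k rs "Suc j"] by simp
  then show ?thesis
    using next_start(3)[of "phase_start k rs j" rs i k] assms(2,3) False
    unfolding phase_start_Suc by simp
qed

definition phase_pages :: "nat \<Rightarrow> 'a list \<Rightarrow> nat \<Rightarrow> 'a set" where
  "phase_pages k rs j = pages_between rs (phase_start k rs j) (phase_start k rs (Suc j))"

lemma finite_phase_pages [simp]: "finite (phase_pages k rs j)"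
  by (simp add: phase_pages_def)

lemma card_phase_pages_le:
  assumes "k \<ge> 1"
  shows "card (phase_pages k rs j) \<le> k"
proof (cases "phase_start k rs j < phase_start k rs (Suc j)")
  case True
  have "card (pages_between rs (phase_start k rs j) (Suc (phase_start k rs (Suc j) - 1))) \<le> k"
    by (rule card_phase_prefix_le[OF assms]) (use True in auto)
  then show ?thesis unfolding phase_pages_def using True by simp
next
  case False
  then show ?thesis unfolding phase_pages_def pages_between_def by simp
qed

lemma phase_pages_full:
  assumes "k \<ge> 1" "phase_start k rs (Suc j) < length rs"
  shows "rs ! phase_start k rs (Suc j) \<notin> phase_pages k rs j" "card (phase_pages k rs j) = k"
proof -
  let ?s = "phase_start k rs j" and ?t = "phase_start k rs (Suc j)"
  have "?s < length rs" using assms(2) phase_start_le_Suc[of k rs j] by simp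
  then have "k < card (pages_between rs ?s (Suc ?t))"
    using next_start(4)[of ?s rs k] assms(2) unfolding phase_start_Suc by simp
  also have "pages_between rs ?s (Suc ?t) = insert (rs ! ?t) (phase_pages k rs j)"
    unfolding phase_pages_def using phase_start_le_Suc[of k rs j] by (simp add: pages_between_Suc)
  finally have "k < card (insert (rs ! ?t) (phase_pages k rs j))" .
  then show "rs ! ?t \<notin> phase_pages k rs j" "card (phase_pages k rs j) = k"
    using card_phase_pages_le[OF assms(1), of rs j] by (auto simp: card_insert_if split: if_splits)
qed

lemma phase_exists:
  assumes "i < length rs"
  obtains j where "phase_start k rs j \<le> i" "i < phase_start k rs (Suc j)"
proof -
  have ex: "\<exists>j. i < phase_start k rs j" using assms by (intro exI[of _ "length rs"]) simp
  define j where "j = (LEAST j. i < phase_start k rs j)"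
  have i_less: "i < phase_start k rs j" unfolding j_def by (rule LeastI_ex[OF ex])
  then obtain j' where j': "j = Suc j'" by (cases j) auto
  then have "\<not> i < phase_start k rs j'" unfolding j_def by (metis lessI not_less_Least)
  then show ?thesis using i_less j' by (intro that[of j']) auto
qed

lemma phase_unique:
  assumes "phase_start k rs j \<le> i" "i < phase_start k rs (Suc j)"
    and "phase_start k rs j' \<le> i" "i < phase_start k rs (Suc j')"
  shows "j = j'"
proof (rule ccontr)
  assume "j \<noteq> j'"
  then have "Suc j \<le> j' \<or> Suc j' \<le> j" by auto
  then show False
    using phase_start_mono[of "Suc j" j' k rs] phase_start_mono[of "Suc j'" j k rs] assms by auto
qed

lemma shape_step_first_phase:
  assumes "finite Mk" "card (insert r Mk) \<le> k"
  shows "shape_step k r (Mk, {}, 0) = (insert r Mk, {}, 0)"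
  using assms by (cases "r \<in> Mk") (auto simp: insert_absorb)

lemma shape_step_new_phase:
  assumes "r \<notin> Old" "card Old = k"
  shows "shape_step k r (Old, U, card U) = ({r}, Old, 1)"
  using assms by simp

lemma shape_step_in_phase:
  assumes "finite Old" "card Old = k" "finite Mk" "card (insert r Mk) \<le> k"
  shows "shape_step k r (Mk, Old - Mk, card (Mk - Old)) = (insert r Mk, Old - insert r Mk, card (insert r Mk - Old))"
proof (cases "r \<in> Mk")
  case True
  then show ?thesis by (simp add: insert_absorb)
next
  case False
  define c where "c = card (Old \<inter> Mk)"
  have "card (Old - Mk) = k - c" "card (Mk - Old) = card Mk - c" "c \<le> card Mk" "c \<le> k"
    using assms(1-3) card_mono[of Old "Old \<inter> Mk"] card_mono[of Mk "Old \<inter> Mk"] unfolding c_def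
    by (auto simp: card_Diff_subset_Int Int_commute)
  moreover have "card Mk < k" using assms(3,4) False by simp
  ultimately show ?thesis
    using False assms(3) by (auto simp: insert_Diff_if)
qed

lemma shape_after_first_phase:
  assumes "k \<ge> 1" "i \<le> phase_start k rs (Suc 0)"
  shows "shape_after k rs i = (pages_between rs 0 i, {}, 0)"
  using assms(2)
proof (induction i)
  case (Suc i)
  then have "card (pages_between rs 0 (Suc i)) \<le> k"
    using card_phase_prefix_le[OF assms(1), of rs 0 i] by simp
  then show ?case using Suc by (simp add: shape_step_first_phase pages_between_Suc del: shape_step.simps)
qed simp

lemma shape_after_in_phase_from_start:
  assumes "k \<ge> 1" "1 \<le> j" "phase_start k rs j < length rs"
    and start: "shape_after k rs (phase_start k rs j) = (phase_pages k rs (j - 1), U, card U)"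
    and i: "phase_start k rs j < i" "i \<le> phase_start k rs (Suc j)"
  shows "shape_after k rs i = (pages_between rs (phase_start k rs j) i,
      phase_pages k rs (j - 1) - pages_between rs (phase_start k rs j) i,
      card (pages_between rs (phase_start k rs j) i - phase_pages k rs (j - 1)))"
proof -
  let ?s = "phase_start k rs j" and ?Old = "phase_pages k rs (j - 1)"
  have "rs ! ?s \<notin> ?Old" "card ?Old = k"
    using phase_pages_full[OF assms(1), of rs "j - 1"] assms(2,3) by simp_all
  then have first: "shape_after k rs (Suc ?s) = ({rs ! ?s}, ?Old, 1)"
    using start by (simp add: shape_step_new_phase del: shape_step.simps)
  from i have "Suc ?s \<le> i" by simp
  then show ?thesis
    using i(2)
  proof (induction i rule: dec_induct)
    case base
    then show ?case using first \<open>rs ! ?s \<notin> ?Old\<close> by (simp add: pages_between_Suc insert_Diff_if)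
  next
    case (step i)
    then have "card (insert (rs ! i) (pages_between rs ?s i)) \<le> k"
      using card_phase_prefix_le[OF assms(1), of rs j i] by (simp add: pages_between_Suc)
    then show ?case
      using step shape_step_in_phase[OF _ \<open>card ?Old = k\<close>]
      by (simp add: pages_between_Suc del: shape_step.simps)
  qed
qed

lemma card_Diff_swap:
  assumes "finite A" "finite B" "card A = card B"
  shows "card (A - B) = card (B - A)"
  using assms by (simp add: card_Diff_subset_Int Int_commute)

lemma shape_after_phase_start:
  assumes "k \<ge> 1" "1 \<le> j" "phase_start k rs j < length rs"
  shows "\<exists>U. shape_after k rs (phase_start k rs j) = (phase_pages k rs (j - 1), U, card U)"
  using assms(2,3)
proof (induction j rule: nat_induct_at_least)
  case base
  then show ?case
    using shape_after_first_phase[OF assms(1) order_refl, of rs]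
    by (intro exI[of _ "{}"]) (simp add: phase_pages_def)
next
  case (Suc j)
  let ?Old = "phase_pages k rs (j - 1)" and ?Cur = "phase_pages k rs j"
  have less: "phase_start k rs j < phase_start k rs (Suc j)" "phase_start k rs j < length rs"
    using Suc.prems phase_start_le_Suc[of k rs j] by (auto intro: phase_start_less_Suc)
  have "card ?Old = k" "card ?Cur = k"
    using phase_pages_full(2)[OF assms(1), of rs "j - 1"] phase_pages_full(2)[OF assms(1), of rs j]
      Suc.hyps Suc.prems less(2) by simp_all
  then have "card (?Cur - ?Old) = card (?Old - ?Cur)"
    by (intro card_Diff_swap) simp_all
  moreover obtain U where "shape_after k rs (phase_start k rs j) = (?Old, U, card U)"
    using Suc.IH less(2) by blast
  ultimately show ?case
    using shape_after_in_phase_from_start[OF assms(1) Suc.hyps less(2) _ less(1) order_refl]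
    by (auto simp: phase_pages_def)
qed

lemma shape_after_in_phase:
  assumes "k \<ge> 1" "1 \<le> j" "phase_start k rs j < i" "i \<le> phase_start k rs (Suc j)"
  shows "shape_after k rs i = (pages_between rs (phase_start k rs j) i,
      phase_pages k rs (j - 1) - pages_between rs (phase_start k rs j) i,
      card (pages_between rs (phase_start k rs j) i - phase_pages k rs (j - 1)))"
proof -
  have "phase_start k rs j < length rs"
    using assms(3,4) phase_start_le_length[of k rs "Suc j"] by simp
  then show ?thesis
    using shape_after_phase_start[OF assms(1,2)] shape_after_in_phase_from_start[OF assms(1,2)] assms(3,4)
    by blast
qed

definition capped_harmonic :: "nat \<Rightarrow> nat \<Rightarrow> real" where
  "capped_harmonic l w = (\<Sum>v = 1..w. min 1 (real l / real v))"

lemma capped_harmonic_Suc: "capped_harmonic l (Suc w) = capped_harmonic l w + min 1 (real l / real (Suc w))"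
  by (simp add: capped_harmonic_def)

lemma capped_harmonic_nonneg: "capped_harmonic l w \<ge> 0"
  unfolding capped_harmonic_def by (intro sum_nonneg) auto

lemma H_Suc: "H (Suc w) = H w + 1 / real (Suc w)"
  by (simp add: H_def)

lemma H_nonneg: "H w \<ge> 0"
  unfolding H_def by (intro sum_nonneg) auto

lemma H_mono: "a \<le> b \<Longrightarrow> H a \<le> H b"
  unfolding H_def by (rule sum_mono2) auto

lemma inverse_Suc_le_ln_diff:
  fixes x :: real
  assumes "x > 0"
  shows "1 / (x + 1) \<le> ln (x + 1) - ln x"
proof -
  have "ln (x / (x + 1)) \<le> x / (x + 1) - 1" using assms by (intro ln_le_minus_one) auto
  moreover have "ln (x / (x + 1)) = ln x - ln (x + 1)" using assms by (simp add: ln_div)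
  moreover have "x / (x + 1) - 1 = - 1 / (x + 1)" using assms by (simp add: field_simps)
  ultimately show ?thesis by (simp add: field_simps)
qed

lemma capped_harmonic_le_aux:
  assumes l: "l \<ge> 1"
  shows "capped_harmonic l w \<le> (if w \<le> l then real w else real l + real l * (ln (real w) - ln (real l)))"
proof (induction w)
  case 0
  then show ?case by (simp add: capped_harmonic_def)
next
  case (Suc w)
  show ?case
  proof (cases "Suc w \<le> l")
    case True
    then have "min 1 (real l / real (Suc w)) = 1" by (simp add: field_simps)
    then show ?thesis using Suc True by (simp add: capped_harmonic_Suc)
  next
    case False
    have le: "min 1 (real l / real (Suc w)) \<le> real l / real (Suc w)" by simp
    have "w \<ge> l" using False by simp
    then have "1 / (real w + 1) \<le> ln (real w + 1) - ln (real w)"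
      using l by (intro inverse_Suc_le_ln_diff) auto
    then have "real l * (1 / (real w + 1)) \<le> real l * (ln (real w + 1) - ln (real w))"
      by (intro mult_left_mono) auto
    then have step: "real l / real (Suc w) \<le> real l * (ln (real (Suc w)) - ln (real w))"
      by (simp add: add.commute)
    show ?thesis
    proof (cases "w \<le> l")
      case True
      then have "w = l" using False by simp
      then show ?thesis using Suc False le step by (simp add: capped_harmonic_Suc)
    next
      case False
      then show ?thesis using Suc \<open>\<not> Suc w \<le> l\<close> le step
        by (auto simp: capped_harmonic_Suc algebra_simps)
    qed
  qed
qed

lemma capped_harmonic_le:
  assumes l: "l \<ge> 1"
  shows "capped_harmonic l w \<le> real l + real l * ln (1 + real w / real l)"
proof -
  have lp: "real l > 0" using l by simp
  show ?thesis
  proof (cases "w \<le> l")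
    case True
    have "0 \<le> real l * ln (1 + real w / real l)" "real w \<le> real l" using lp True by simp_all
    moreover have "capped_harmonic l w \<le> real w" using capped_harmonic_le_aux[OF l, of w] True by simp
    ultimately show ?thesis by linarith
  next
    case False
    then have wp: "real w > 0" by simp
    have "ln (real w) - ln (real l) = ln (real w / real l)" using wp lp by (simp add: ln_div)
    also have "\<dots> \<le> ln (1 + real w / real l)" using wp lp by (intro ln_mono) auto
    finally have "real l * (ln (real w) - ln (real l)) \<le> real l * ln (1 + real w / real l)"
      using lp by (intro mult_left_mono) auto
    then show ?thesis using capped_harmonic_le_aux[OF l, of w] False by simp
  qed
qed

definition phase_bound :: "real \<Rightarrow> real \<Rightarrow> real" where
  "phase_bound l e = 2 * l + l * ln (1 + e / l)"

section \<open>The cost of one phase\<close>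

lemma latest_pred_unchanged:
  assumes "a \<le> b" "q \<notin> pages_between rs a b"
  shows "latest_pred rs ps b q = latest_pred rs ps a q"
  using assms by (induction b rule: dec_induct) (auto simp: pages_between_Suc)

lemma latest_pred_last_request:
  assumes "t < b" "rs ! t = q" "\<forall>t'. t < t' \<and> t' < b \<longrightarrow> rs ! t' \<noteq> q"
  shows "latest_pred rs ps b q = ps ! t"
proof -
  have "q \<notin> pages_between rs (Suc t) b"
    using assms(3) unfolding pages_between_def by (auto simp: Suc_le_eq)
  then show ?thesis
    using latest_pred_unchanged[of "Suc t" b q rs ps] assms(1,2) by simp
qed

definition new_page_count :: "nat \<Rightarrow> 'a list \<Rightarrow> nat \<Rightarrow> nat" where
  "new_page_count k rs j = card (phase_pages k rs j - phase_pages k rs (j - 1))"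

text \<open>The prediction in force at the start of phase \<open>j\<close> is the one given with the last request of
  the page in phase \<open>j - 1\<close>, i.e. the counted one (see \<open>latest_pred_last_request\<close>).\<close>

definition phase_eta :: "nat \<Rightarrow> 'a list \<Rightarrow> bool list \<Rightarrow> bool \<Rightarrow> nat \<Rightarrow> nat" where
  "phase_eta k rs ps h j = card {q \<in> phase_pages k rs (j - 1).
     latest_pred rs ps (phase_start k rs j) q = h \<and> (q \<in> phase_pages k rs j) = h}"

locale later_phase =
  fixes k :: nat and rs :: "'a list" and ps :: "bool list" and j :: nat
  assumes k_ge_1: "k \<ge> 1" and j_ge_1: "1 \<le> j" and phase_nonempty: "phase_start k rs j < length rs"
begin

abbreviation "phase_begin \<equiv> phase_start k rs j"
abbreviation "phase_end \<equiv> phase_start k rs (Suc j)"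
abbreviation "old \<equiv> phase_pages k rs (j - 1)"
abbreviation "cur \<equiv> phase_pages k rs j"
abbreviation "seen i \<equiv> pages_between rs phase_begin i"
abbreviation "start_pred \<equiv> latest_pred rs ps phase_begin"
abbreviation "ell \<equiv> new_page_count k rs j"
abbreviation "eta0 \<equiv> phase_eta k rs ps False j"

lemma card_old: "card old = k" and first_request_new: "rs ! phase_begin \<notin> old"
  using phase_pages_full[OF k_ge_1, of rs "j - 1"] j_ge_1 phase_nonempty by simp_all

lemma phase_begin_less_end: "phase_begin < phase_end"
  using phase_start_less_Suc[OF phase_nonempty] .

lemma ell_ge_1: "ell \<ge> 1"
proof -
  have "rs ! phase_begin \<in> cur - old"
    using phase_begin_less_end first_request_new unfolding phase_pages_def pages_between_def by auto
  then show ?thesis unfolding new_page_count_def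
    by (metis One_nat_def Suc_leI card_gt_0_iff empty_iff finite_Diff finite_phase_pages)
qed

lemma seen_subset_cur: "i \<le> phase_end \<Longrightarrow> seen i \<subseteq> cur"
  unfolding phase_pages_def pages_between_def by auto

lemma request_in_cur: "phase_begin \<le> i \<Longrightarrow> i < phase_end \<Longrightarrow> rs ! i \<in> cur"
  unfolding phase_pages_def pages_between_def by auto

lemma shape_dist_in_phase:
  assumes "phase_begin < i" "i \<le> phase_end"
  defines "sh \<equiv> (seen i, old - seen i, card (seen i - old))"
  shows "shape_wf k sh" "shape_dist sh (latest_pred rs ps i) (config_dist k rs ps i)"
  using shape_dist_config_dist[OF k_ge_1, of rs i ps] shape_after_in_phase[OF k_ge_1 j_ge_1 assms(1,2)]
  unfolding sh_def by simp_all

lemma fault_prob_unrequested: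
  assumes "phase_begin \<le> i" "i < phase_end" "rs ! i \<in> old - seen i"
  shows "fault_prob k rs ps i =
    (if start_pred (rs ! i)
     then min (card (seen i - old)) (card {q \<in> old - seen i. start_pred q})
       / card {q \<in> old - seen i. start_pred q}
     else (card (seen i - old) - min (card (seen i - old)) (card {q \<in> old - seen i. start_pred q}))
       / card {q \<in> old - seen i. \<not> start_pred q})"
proof -
  have "phase_begin \<noteq> i" using assms(3) first_request_new by auto
  then have i: "phase_begin < i" using assms(1) by simp
  have pred: "latest_pred rs ps i q = start_pred q" if "q \<notin> seen i" for q
    using latest_pred_unchanged[OF assms(1) that] .
  then have "{q \<in> old - seen i. latest_pred rs ps i q} = {q \<in> old - seen i. start_pred q}"
    and "{q \<in> old - seen i. \<not> latest_pred rs ps i q} = {q \<in> old - seen i. \<not> start_pred q}"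
    by auto
  moreover note dist = shape_dist_in_phase[OF i less_imp_le[OF assms(2)]]
  ultimately show ?thesis
    using prob_fault_1page[OF dist] prob_fault_0page[OF dist] pred[of "rs ! i"] assms(3)
    unfolding fault_prob_def by simp
qed

definition unrequested :: "bool \<Rightarrow> nat \<Rightarrow> nat" where
  "unrequested b i = card {q \<in> (old - seen i) \<inter> cur. start_pred q = b}"

lemma unrequested_Suc:
  assumes "phase_begin \<le> i" "i < phase_end" "rs ! i \<in> old - seen i"
  shows "start_pred (rs ! i) = b \<Longrightarrow> unrequested b i = Suc (unrequested b (Suc i))"
    and "start_pred (rs ! i) \<noteq> b \<Longrightarrow> unrequested b (Suc i) = unrequested b i"
proof -
  let ?A = "{q \<in> (old - seen i) \<inter> cur. start_pred q = b}"
  have eq: "{q \<in> (old - seen (Suc i)) \<inter> cur. start_pred q = b} = ?A - {rs ! i}"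
    using assms(1) by (auto simp: pages_between_Suc)
  have "rs ! i \<in> cur" using request_in_cur[OF assms(1,2)] .
  then have mem: "rs ! i \<in> ?A \<longleftrightarrow> start_pred (rs ! i) = b" using assms(3) by blast
  show "unrequested b i = Suc (unrequested b (Suc i))" if "start_pred (rs ! i) = b"
    unfolding unrequested_def eq by (rule card.remove) (use mem that in simp_all)
  show "unrequested b (Suc i) = unrequested b i" if "start_pred (rs ! i) \<noteq> b"
    unfolding unrequested_def eq using mem that by simp
qed

lemma ell_le_card_old_minus_cur: "ell \<le> card (old - cur)"
proof -
  have "ell = card cur - card (cur \<inter> old)" unfolding new_page_count_def by (simp add: card_Diff_subset_Int)
  moreover have "card (old - cur) = card old - card (old \<inter> cur)" by (simp add: card_Diff_subset_Int)
  ultimately show ?thesis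
    using card_phase_pages_le[OF k_ge_1, of rs j] card_old by (simp add: Int_commute diff_le_mono)
qed

lemma card_old_minus_cur: "card (old - cur) = card {q \<in> old - cur. start_pred q} + eta0"
proof -
  have "card (old - cur) = card ({q \<in> old - cur. start_pred q} \<union> {q \<in> old. start_pred q = False \<and> (q \<in> cur) = False})"
    by (rule arg_cong[where f = card]) auto
  also have "\<dots> = card {q \<in> old - cur. start_pred q} + card {q \<in> old. start_pred q = False \<and> (q \<in> cur) = False}"
    by (rule card_Un_disjoint) auto
  finally show ?thesis unfolding phase_eta_def .
qed

lemma fault_prob_le_1page:
  assumes "phase_begin \<le> i" "i < phase_end" "rs ! i \<in> old - seen i" "start_pred (rs ! i)"
  shows "fault_prob k rs ps i \<le> min 1 (ell / unrequested True i)"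
proof -
  let ?h = "card (seen i - old)" and ?u1 = "card {q \<in> old - seen i. start_pred q}"
    and ?w = "unrequested True i"
  have "?w \<le> ?u1" unfolding unrequested_def by (intro card_mono) auto
  moreover have "?w \<ge> 1" using unrequested_Suc(1)[OF assms(1-3)] assms(4) by simp
  moreover have "?h \<le> ell"
    unfolding new_page_count_def using seen_subset_cur[of i] assms(2) by (intro card_mono) auto
  ultimately have "real (min ?h ?u1) / ?u1 \<le> 1" "real (min ?h ?u1) / ?u1 \<le> ell / ?u1"
    and "real ell / ?u1 \<le> ell / ?w"
    by (auto intro!: divide_right_mono divide_left_mono simp: divide_le_eq_1)
  then show ?thesis using fault_prob_unrequested[OF assms(1-3)] assms(4) by simp
qed

lemma fault_prob_le_0page:
  assumes "phase_begin \<le> i" "i < phase_end" "rs ! i \<in> old - seen i" "\<not> start_pred (rs ! i)"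
  shows "fault_prob k rs ps i \<le> eta0 / unrequested False i"
proof -
  let ?h = "card (seen i - old)" and ?u1 = "card {q \<in> old - seen i. start_pred q}"
    and ?u0 = "card {q \<in> old - seen i. \<not> start_pred q}" and ?w = "unrequested False i"
  have "?w \<le> ?u0" unfolding unrequested_def by (intro card_mono) auto
  moreover have "?w \<ge> 1" using unrequested_Suc(1)[OF assms(1-3), of False] assms(4) by simp
  moreover have "real ?h - real (min ?h ?u1) \<le> eta0"
  proof -
    have "?h \<le> ell"
      unfolding new_page_count_def using seen_subset_cur[of i] assms(2) by (intro card_mono) auto
    moreover have "card {q \<in> old - cur. start_pred q} \<le> ?u1"
      using seen_subset_cur[of i] assms(2) by (intro card_mono) auto
    ultimately show ?thesis
      using ell_le_card_old_minus_cur card_old_minus_cur by (cases "?h \<le> ?u1") auto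
  qed
  ultimately have "(real ?h - real (min ?h ?u1)) / ?u0 \<le> eta0 / ?u0" "real eta0 / ?u0 \<le> eta0 / ?w"
    by (auto intro!: divide_right_mono divide_left_mono)
  then show ?thesis using fault_prob_unrequested[OF assms(1-3)] assms(4) by simp
qed

text \<open>The potential pays for the rest of the phase: one unit for each new page not yet requested,
  the capped harmonic sum for the unrequested old pages predicted 1, and the weighted harmonic sum
  for those predicted 0.\<close>

definition potential :: "nat \<Rightarrow> real" where
  "potential i = real ell - real (card (seen i - old)) + capped_harmonic ell (unrequested True i)
     + real eta0 * H (unrequested False i)"

lemma seen_Suc: "phase_begin \<le> i \<Longrightarrow> seen (Suc i) = insert (rs ! i) (seen i)"
  by (simp add: pages_between_Suc)

lemma potential_drop_1page:
  assumes "phase_begin \<le> i" "i < phase_end" "rs ! i \<in> old - seen i" "start_pred (rs ! i)"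
  shows "potential i - potential (Suc i) = min 1 (ell / unrequested True i)"
proof -
  obtain w where w: "unrequested True i = Suc w" "unrequested True (Suc i) = w"
    using unrequested_Suc(1)[OF assms(1-3)] assms(4) by simp
  have "unrequested False (Suc i) = unrequested False i"
    using unrequested_Suc(2)[OF assms(1-3), of False] assms(4) by simp
  moreover have "seen (Suc i) - old = seen i - old" using assms(3) seen_Suc[OF assms(1)] by auto
  ultimately show ?thesis unfolding potential_def w by (simp add: capped_harmonic_Suc)
qed

lemma potential_drop_0page:
  assumes "phase_begin \<le> i" "i < phase_end" "rs ! i \<in> old - seen i" "\<not> start_pred (rs ! i)"
  shows "potential i - potential (Suc i) = eta0 / unrequested False i"
proof -
  obtain w where w: "unrequested False i = Suc w" "unrequested False (Suc i) = w"
    using unrequested_Suc(1)[OF assms(1-3), of False] assms(4) by simp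
  have "unrequested True (Suc i) = unrequested True i"
    using unrequested_Suc(2)[OF assms(1-3), of True] assms(4) by simp
  moreover have "seen (Suc i) - old = seen i - old" using assms(3) seen_Suc[OF assms(1)] by auto
  ultimately show ?thesis unfolding potential_def w by (simp add: H_Suc algebra_simps)
qed

lemma fault_prob_le_potential_drop:
  assumes "phase_begin \<le> i" "i < phase_end"
  shows "fault_prob k rs ps i \<le> potential i - potential (Suc i)"
proof -
  let ?r = "rs ! i"
  consider (marked) "?r \<in> seen i" | (new) "?r \<notin> seen i" "?r \<notin> old"
    | (old1) "?r \<in> old - seen i" "start_pred ?r" | (old0) "?r \<in> old - seen i" "\<not> start_pred ?r"
    by blast
  then show ?thesis
  proof cases
    case marked
    then have "phase_begin < i" using assms(1) by (cases "i = phase_begin") auto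
    then have "fault_prob k rs ps i = 0"
      unfolding fault_prob_def
      using prob_fault_marked[OF shape_dist_in_phase(2)[OF _ less_imp_le[OF assms(2)]] marked] by blast
    moreover have "potential (Suc i) = potential i"
      unfolding potential_def unrequested_def seen_Suc[OF assms(1)] using marked by (simp add: insert_absorb)
    ultimately show ?thesis by simp
  next
    case new
    then have "card (seen (Suc i) - old) = Suc (card (seen i - old))" "old - seen (Suc i) = old - seen i"
      unfolding seen_Suc[OF assms(1)] by (auto simp: insert_Diff_if)
    then have "potential i - potential (Suc i) = 1" unfolding potential_def unrequested_def by simp
    then show ?thesis unfolding fault_prob_def using measure_pmf.prob_le_1 by simp
  next
    case old1
    then show ?thesis using fault_prob_le_1page[OF assms old1] potential_drop_1page[OF assms old1] by simp
  next
    case old0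
    then show ?thesis using fault_prob_le_0page[OF assms old0] potential_drop_0page[OF assms old0] by simp
  qed
qed

lemma phase_cost_le:
  "(\<Sum>i = phase_begin..<phase_end. fault_prob k rs ps i)
     \<le> phase_bound ell (phase_eta k rs ps True j) + eta0 * H k"
proof -
  have "(\<Sum>i = phase_begin..<phase_end. fault_prob k rs ps i)
      \<le> (\<Sum>i = phase_begin..<phase_end. - (potential (Suc i) - potential i))"
    using fault_prob_le_potential_drop by (intro sum_mono) auto
  also have "\<dots> = potential phase_begin - potential phase_end"
    unfolding sum_negf sum_Suc_diff'[OF less_imp_le[OF phase_begin_less_end]] by simp
  also have "\<dots> \<le> phase_bound ell (phase_eta k rs ps True j) + eta0 * H k"
  proof -
    have "seen phase_end - old = cur - old" by (simp add: phase_pages_def)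
    then have "potential phase_end \<ge> 0"
      unfolding potential_def new_page_count_def using capped_harmonic_nonneg H_nonneg by simp
    moreover have "unrequested True phase_begin = phase_eta k rs ps True j"
      unfolding unrequested_def phase_eta_def by (rule arg_cong[where f = card]) auto
    moreover have "unrequested False phase_begin \<le> card old"
      unfolding unrequested_def by (intro card_mono) auto
    then have "eta0 * H (unrequested False phase_begin) \<le> eta0 * H k"
      using card_old by (intro mult_left_mono H_mono) auto
    ultimately show ?thesis
      using capped_harmonic_le[OF ell_ge_1, of "phase_eta k rs ps True j"]
      unfolding potential_def phase_bound_def by simp
  qed
  finally show ?thesis .
qed

end

lemma first_phase_cost_le:
  assumes "k \<ge> 1"
  shows "(\<Sum>i<phase_start k rs (Suc 0). fault_prob k rs ps i) \<le> k"
proof -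
  let ?t = "phase_start k rs (Suc 0)"
  have "fault_prob k rs ps i \<le> card (pages_between rs 0 (Suc i)) - real (card (pages_between rs 0 i))"
    if "i < ?t" for i
  proof (cases "rs ! i \<in> pages_between rs 0 i")
    case True
    have "shape_dist (pages_between rs 0 i, {}, 0) (latest_pred rs ps i) (config_dist k rs ps i)"
      using shape_dist_config_dist[OF assms, of rs i ps] shape_after_first_phase[OF assms, of i rs] that
      by (simp del: shape_dist.simps shape_wf.simps)
    then have "fault_prob k rs ps i = 0" unfolding fault_prob_def by (rule prob_fault_marked) (rule True)
    then show ?thesis using True by (simp add: pages_between_Suc insert_absorb)
  next
    case False
    then show ?thesis
      unfolding fault_prob_def using measure_pmf.prob_le_1 by (simp add: pages_between_Suc)
  qed
  then have "(\<Sum>i<?t. fault_prob k rs ps i) \<le> (\<Sum>i<?t. card (pages_between rs 0 (Suc i)) - real (card (pages_between rs 0 i)))"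
    by (intro sum_mono) simp
  also have "\<dots> = card (pages_between rs 0 ?t)"
    by (subst sum_lessThan_telescope) simp
  also have "\<dots> \<le> k" using card_phase_pages_le[OF assms, of rs 0] by (simp add: phase_pages_def)
  finally show ?thesis .
qed

lemma sum_over_phases:
  "(\<Sum>i<phase_start k rs m. f i) = (\<Sum>j<m. \<Sum>i = phase_start k rs j..<phase_start k rs (Suc j). f i)"
proof (induction m)
  case (Suc m)
  have "(\<Sum>i<phase_start k rs (Suc m). f i) =
      (\<Sum>i<phase_start k rs m. f i) + (\<Sum>i = phase_start k rs m..<phase_start k rs (Suc m). f i)"
    using phase_start_le_Suc[of k rs m]
    by (simp add: atLeast0LessThan[symmetric] sum.atLeastLessThan_concat)
  then show ?case using Suc by simp
qed simp

definition later_phases :: "nat \<Rightarrow> 'a list \<Rightarrow> nat set" where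
  "later_phases k rs = {j. 1 \<le> j \<and> phase_start k rs j < length rs}"

lemma later_phases_subset: "later_phases k rs \<subseteq> {1..<length rs}"
  unfolding later_phases_def using phase_index_less_length by auto

lemma finite_later_phases [simp]: "finite (later_phases k rs)"
  using later_phases_subset by (rule finite_subset) simp

lemma mp_expected_cost_le_later_phases:
  assumes "k \<ge> 1" "length ps = length rs"
  shows "mp_expected_cost k rs ps \<le>
    k + (\<Sum>j\<in>later_phases k rs. \<Sum>i = phase_start k rs j..<phase_start k rs (Suc j). fault_prob k rs ps i)"
proof -
  let ?cost = "\<lambda>j. \<Sum>i = phase_start k rs j..<phase_start k rs (Suc j). fault_prob k rs ps i"
  have cost: "mp_expected_cost k rs ps = (\<Sum>j<length rs. ?cost j)"
    using mp_expected_cost_eq_sum_fault_prob[OF assms] sum_over_phases[of _ k rs "length rs"] by simp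
  show ?thesis
  proof (cases "length rs = 0")
    case True
    then show ?thesis using cost later_phases_subset[of k rs] by simp
  next
    case False
    have "?cost j = 0" if "j \<in> {1..<length rs} - later_phases k rs" for j
      using that phase_start_le_length[of k rs j] phase_start_le_Suc[of k rs j]
        phase_start_le_length[of k rs "Suc j"] unfolding later_phases_def by simp
    then have "(\<Sum>j = 1..<length rs. ?cost j) = (\<Sum>j\<in>later_phases k rs. ?cost j)"
      using later_phases_subset by (intro sum.mono_neutral_right) auto
    moreover have "(\<Sum>j<length rs. ?cost j) = ?cost 0 + (\<Sum>j = 1..<length rs. ?cost j)"
      using False by (simp add: atLeast0LessThan[symmetric] sum.atLeast_Suc_lessThan)
    moreover have "?cost 0 \<le> k"
      using first_phase_cost_le[OF assms(1), of rs ps] by (simp add: atLeast0LessThan)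
    ultimately show ?thesis using cost by simp
  qed
qed

lemma bij_betw_last_occurrences:
  "bij_betw (\<lambda>i. xs ! i) {i. a \<le> i \<and> i < b \<and> (\<forall>i'. i < i' \<and> i' < b \<longrightarrow> xs ! i' \<noteq> xs ! i)}
     (pages_between xs a b)"
proof (rule bij_betw_imageI)
  show "inj_on (\<lambda>i. xs ! i) {i. a \<le> i \<and> i < b \<and> (\<forall>i'. i < i' \<and> i' < b \<longrightarrow> xs ! i' \<noteq> xs ! i)}"
  proof (rule inj_onI)
    fix x y
    assume "x \<in> {i. a \<le> i \<and> i < b \<and> (\<forall>i'. i < i' \<and> i' < b \<longrightarrow> xs ! i' \<noteq> xs ! i)}"
      and "y \<in> {i. a \<le> i \<and> i < b \<and> (\<forall>i'. i < i' \<and> i' < b \<longrightarrow> xs ! i' \<noteq> xs ! i)}"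
      and "xs ! x = xs ! y"
    then have "\<not> x < y" "\<not> y < x" by auto
    then show "x = y" by simp
  qed
  show "(\<lambda>i. xs ! i) ` {i. a \<le> i \<and> i < b \<and> (\<forall>i'. i < i' \<and> i' < b \<longrightarrow> xs ! i' \<noteq> xs ! i)} =
      pages_between xs a b"
  proof
    show "pages_between xs a b \<subseteq> (\<lambda>i. xs ! i) ` {i. a \<le> i \<and> i < b \<and> (\<forall>i'. i < i' \<and> i' < b \<longrightarrow> xs ! i' \<noteq> xs ! i)}"
    proof
      fix q assume "q \<in> pages_between xs a b"
      then have ne: "{t \<in> {a..<b}. xs ! t = q} \<noteq> {}" unfolding pages_between_def by auto
      have fin: "finite {t \<in> {a..<b}. xs ! t = q}" by simp
      define m where "m = Max {t \<in> {a..<b}. xs ! t = q}"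
      have "m \<in> {t \<in> {a..<b}. xs ! t = q}" unfolding m_def using fin ne by (rule Max_in)
      moreover have "xs ! i' \<noteq> q" if "m < i'" "i' < b" for i'
      proof
        assume "xs ! i' = q"
        with that calculation have "i' \<in> {t \<in> {a..<b}. xs ! t = q}" by auto
        then have "i' \<le> m" unfolding m_def using fin by (intro Max_ge)
        with that show False by simp
      qed
      ultimately show "q \<in> (\<lambda>i. xs ! i) ` {i. a \<le> i \<and> i < b \<and> (\<forall>i'. i < i' \<and> i' < b \<longrightarrow> xs ! i' \<noteq> xs ! i)}"
        by (intro image_eqI[of _ _ m]) auto
    qed
  qed (auto simp: pages_between_def)
qed

lemma card_Collect_bij_betw:
  assumes "bij_betw f A B"
  shows "card {x \<in> A. P (f x)} = card {y \<in> B. P y}"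
proof -
  have "bij_betw f {x \<in> A. P (f x)} {y \<in> B. P y}"
    using assms unfolding bij_betw_def inj_on_def by auto
  then show ?thesis by (rule bij_betw_same_card)
qed

definition counted_errors :: "nat \<Rightarrow> 'a list \<Rightarrow> bool list \<Rightarrow> bool \<Rightarrow> nat \<Rightarrow> nat set" where
  "counted_errors k rs ps h j = {i. phase_start k rs (j - 1) \<le> i \<and> i < phase_start k rs j \<and>
     (\<forall>i'. i < i' \<and> i' < phase_start k rs j \<longrightarrow> rs ! i' \<noteq> rs ! i) \<and>
     ps ! i = h \<and> (rs ! i \<in> phase_pages k rs j) = h}"

lemma card_counted_errors:
  assumes "j \<ge> 1"
  shows "card (counted_errors k rs ps h j) = phase_eta k rs ps h j"
proof -
  let ?L = "{i. phase_start k rs (j - 1) \<le> i \<and> i < phase_start k rs j \<and>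
     (\<forall>i'. i < i' \<and> i' < phase_start k rs j \<longrightarrow> rs ! i' \<noteq> rs ! i)}"
  define P where "P q \<longleftrightarrow> latest_pred rs ps (phase_start k rs j) q = h \<and> (q \<in> phase_pages k rs j) = h" for q
  have "ps ! i = latest_pred rs ps (phase_start k rs j) (rs ! i)" if "i \<in> ?L" for i
    using latest_pred_last_request[of i "phase_start k rs j" rs "rs ! i" ps] that by simp
  then have "counted_errors k rs ps h j = {i \<in> ?L. P (rs ! i)}"
    unfolding counted_errors_def P_def by auto
  moreover have "bij_betw (\<lambda>i. rs ! i) ?L (phase_pages k rs (j - 1))"
    using bij_betw_last_occurrences[of rs "phase_start k rs (j - 1)" "phase_start k rs j"] assms
    by (simp add: phase_pages_def)
  ultimately show ?thesis
    unfolding phase_eta_def P_def[symmetric] by (simp only: card_Collect_bij_betw)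
qed

lemma truth_iff_not_in_next_phase:
  assumes "phase_start k rs j \<le> i" "i < phase_start k rs (Suc j)"
  shows "truth k rs i \<longleftrightarrow> rs ! i \<notin> phase_pages k rs (Suc j)"
proof -
  have "truth k rs i \<longleftrightarrow>
      (\<forall>i'. phase_start k rs (Suc j) \<le> i' \<and> i' < phase_start k rs (Suc (Suc j)) \<longrightarrow> rs ! i' \<noteq> rs ! i)"
    unfolding truth_def using assms phase_unique[OF _ _ assms] by blast
  also have "\<dots> \<longleftrightarrow> rs ! i \<notin> phase_pages k rs (Suc j)"
    unfolding phase_pages_def pages_between_def
    by (auto simp: image_iff) (metis atLeastLessThan_iff)
  finally show ?thesis .
qed

lemma mem_counted_errors:
  assumes "j \<ge> 1"
  shows "i \<in> counted_errors k rs ps h j \<longleftrightarrow>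
    phase_start k rs (j - 1) \<le> i \<and> i < phase_start k rs j \<and>
    (\<forall>i'. i < i' \<and> i' < phase_start k rs j \<longrightarrow> rs ! i' \<noteq> rs ! i) \<and>
    ps ! i = h \<and> truth k rs i = (\<not> h)"
  using truth_iff_not_in_next_phase[of k rs "j - 1" i] assms unfolding counted_errors_def by auto

lemma eta_errors_eq_Union:
  "{i. i < length rs \<and> counted k rs i \<and> ps ! i = h \<and> truth k rs i = (\<not> h)} =
    (\<Union>j\<in>later_phases k rs. counted_errors k rs ps h j)"
proof (intro equalityI subsetI)
  fix i assume "i \<in> {i. i < length rs \<and> counted k rs i \<and> ps ! i = h \<and> truth k rs i = (\<not> h)}"
  then obtain j where j: "phase_start k rs j \<le> i" "i < phase_start k rs (Suc j)"
    "phase_start k rs (Suc j) < length rs"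
    "\<forall>i'. i < i' \<and> i' < phase_start k rs (Suc j) \<longrightarrow> rs ! i' \<noteq> rs ! i"
    and "ps ! i = h" "truth k rs i = (\<not> h)"
    unfolding counted_def by blast
  then have "i \<in> counted_errors k rs ps h (Suc j)"
    using mem_counted_errors[of "Suc j" i k rs ps h] by simp
  moreover have "Suc j \<in> later_phases k rs" using j(3) unfolding later_phases_def by simp
  ultimately show "i \<in> (\<Union>j\<in>later_phases k rs. counted_errors k rs ps h j)" by blast
next
  fix i assume "i \<in> (\<Union>j\<in>later_phases k rs. counted_errors k rs ps h j)"
  then obtain j where j: "1 \<le> j" "phase_start k rs j < length rs" "i \<in> counted_errors k rs ps h j"
    unfolding later_phases_def by blast
  then have i: "phase_start k rs (j - 1) \<le> i" "i < phase_start k rs j"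
    "\<forall>i'. i < i' \<and> i' < phase_start k rs j \<longrightarrow> rs ! i' \<noteq> rs ! i" "ps ! i = h" "truth k rs i = (\<not> h)"
    using mem_counted_errors[OF j(1), of i k rs ps h] j(3) by simp_all
  have "Suc (j - 1) = j" using j(1) by simp
  then have "counted k rs i" unfolding counted_def using i(1-3) j(2) by (intro exI[of _ "j - 1"]) simp
  then show "i \<in> {i. i < length rs \<and> counted k rs i \<and> ps ! i = h \<and> truth k rs i = (\<not> h)}"
    using i j(2) by simp
qed

lemma counted_errors_disjoint:
  assumes "1 \<le> j" "1 \<le> j'" "j \<noteq> j'"
  shows "counted_errors k rs ps h j \<inter> counted_errors k rs ps h j' = {}"
proof -
  have "j - 1 = j' - 1" if "i \<in> counted_errors k rs ps h j" "i \<in> counted_errors k rs ps h j'" for i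
    using that assms by (intro phase_unique[of k rs "j - 1" i "j' - 1"]) (auto simp: counted_errors_def)
  then show ?thesis using assms by force
qed

lemma eta_eq_sum_phase_eta: "eta k rs ps h = (\<Sum>j\<in>later_phases k rs. phase_eta k rs ps h j)"
proof -
  have "eta k rs ps h = card (\<Union>j\<in>later_phases k rs. counted_errors k rs ps h j)"
    unfolding eta_def eta_errors_eq_Union ..
  also have "\<dots> = (\<Sum>j\<in>later_phases k rs. card (counted_errors k rs ps h j))"
  proof (rule card_UN_disjoint)
    show "\<forall>j\<in>later_phases k rs. finite (counted_errors k rs ps h j)"
      unfolding counted_errors_def by (auto intro: finite_subset[of _ "{..<phase_start k rs _}"])
    show "\<forall>j\<in>later_phases k rs. \<forall>j'\<in>later_phases k rs. j \<noteq> j' \<longrightarrow>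
        counted_errors k rs ps h j \<inter> counted_errors k rs ps h j' = {}"
      using counted_errors_disjoint unfolding later_phases_def by blast
  qed simp
  also have "\<dots> = (\<Sum>j\<in>later_phases k rs. phase_eta k rs ps h j)"
    by (intro sum.cong refl card_counted_errors) (simp add: later_phases_def)
  finally show ?thesis .
qed

section \<open>A lower bound on OPT\<close>

lemma offline_run_step:
  assumes "offline_run k rs Cs" "i < length rs"
  shows "if rs ! i \<in> Cs ! i then Cs ! Suc i = Cs ! i
    else if card (Cs ! i) < k then Cs ! Suc i = insert (rs ! i) (Cs ! i)
    else \<exists>q \<in> Cs ! i. Cs ! Suc i = insert (rs ! i) (Cs ! i - {q})"
  using assms unfolding offline_run_def by blast

lemma offline_run_cache_Suc_subset:
  assumes "offline_run k rs Cs" "i < length rs"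
  shows "Cs ! Suc i \<subseteq> insert (rs ! i) (Cs ! i)"
  using offline_run_step[OF assms] by (auto split: if_splits)

lemma offline_run_card_cache_le:
  assumes "offline_run k rs Cs" "i \<le> length rs"
  shows "finite (Cs ! i) \<and> card (Cs ! i) \<le> k"
  using assms(2)
proof (induction i)
  case 0
  then show ?case using assms(1) unfolding offline_run_def by simp
next
  case (Suc i)
  then have IH: "finite (Cs ! i)" "card (Cs ! i) \<le> k" and i: "i < length rs" by auto
  have "finite (Cs ! Suc i)"
    using finite_subset[OF offline_run_cache_Suc_subset[OF assms(1) i]] IH(1) by simp
  moreover have "card (insert (rs ! i) (Cs ! i - {q})) \<le> card (Cs ! i)" if "q \<in> Cs ! i" for q
    using that IH(1) card_insert_le_m1[of "card (Cs ! i)" "Cs ! i - {q}" "rs ! i"]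
    by (auto simp: card_gt_0_iff)
  then have "card (Cs ! Suc i) \<le> k"
    using offline_run_step[OF assms(1) i] IH by (auto simp: card_insert_if split: if_splits)
  ultimately show ?case by blast
qed

lemma offline_run_cache_subset:
  assumes "offline_run k rs Cs" "a \<le> t" "t \<le> length rs"
  shows "Cs ! t \<subseteq> Cs ! a \<union> pages_between rs a t"
  using assms(2,3)
proof (induction t rule: dec_induct)
  case (step t)
  then show ?case
    using offline_run_cache_Suc_subset[OF assms(1), of t] by (auto simp: pages_between_Suc)
qed simp

text \<open>Every page requested in [a, b) that is not cached at time a causes a fault at its first request.\<close>

lemma card_pages_between_le_faults:
  assumes "offline_run k rs Cs" "a \<le> b" "b \<le> length rs"
  shows "card (pages_between rs a b) \<le> k + card {i. a \<le> i \<and> i < b \<and> rs ! i \<notin> Cs ! i}"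
proof -
  let ?X = "pages_between rs a b - Cs ! a"
  have cache_a: "finite (Cs ! a)" "card (Cs ! a) \<le> k"
    using offline_run_card_cache_le[OF assms(1)] assms(2,3) by auto
  have "card (pages_between rs a b) \<le> card (?X \<union> Cs ! a)" using cache_a by (intro card_mono) auto
  also have "\<dots> \<le> card ?X + card (Cs ! a)" by (rule card_Un_le)
  finally have split: "card (pages_between rs a b) \<le> card ?X + card (Cs ! a)" .
  define first where "first q = (LEAST t. a \<le> t \<and> t < b \<and> rs ! t = q)" for q
  have first: "a \<le> first q" "first q < b" "rs ! first q = q" "q \<notin> pages_between rs a (first q)"
    if "q \<in> ?X" for q
  proof -
    have ex: "\<exists>t. a \<le> t \<and> t < b \<and> rs ! t = q" using that unfolding pages_between_def by auto
    show "a \<le> first q" "first q < b" "rs ! first q = q"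
      using LeastI_ex[OF ex] unfolding first_def by auto
    show "q \<notin> pages_between rs a (first q)"
      unfolding pages_between_def first_def using not_less_Least assms(2) \<open>first q < b\<close>
      by (fastforce simp: first_def)
  qed
  have "card ?X \<le> card {i. a \<le> i \<and> i < b \<and> rs ! i \<notin> Cs ! i}"
  proof (rule card_inj_on_le)
    show "inj_on first ?X" by (rule inj_onI) (metis first(3))
    show "first ` ?X \<subseteq> {i. a \<le> i \<and> i < b \<and> rs ! i \<notin> Cs ! i}"
      using first offline_run_cache_subset[OF assms(1)] assms(3) by fastforce
  qed simp
  then show ?thesis using split cache_a by simp
qed

lemma sum_card_Int_le_mult_card:
  assumes "finite F" "finite J" "\<And>i. i \<in> F \<Longrightarrow> card {j \<in> J. i \<in> W j} \<le> m"
  shows "(\<Sum>j\<in>J. card (F \<inter> W j)) \<le> m * card F"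
proof -
  have "(\<Sum>j\<in>J. card (F \<inter> W j)) = (\<Sum>j\<in>J. \<Sum>i\<in>F. if i \<in> W j then 1 else 0)"
    using assms(1) by (simp add: sum.If_cases)
  also have "\<dots> = (\<Sum>i\<in>F. card {j \<in> J. i \<in> W j})"
    using assms(2) by (subst sum.swap) (simp add: sum.If_cases Int_def)
  also have "\<dots> \<le> (\<Sum>i\<in>F. m)" using assms(3) by (rule sum_mono)
  finally show ?thesis by (simp add: mult.commute)
qed

lemma card_phase_windows_le_2:
  "card {j \<in> later_phases k rs. phase_start k rs (j - 1) \<le> i \<and> i < phase_start k rs (Suc j)} \<le> 2"
proof (cases "i < length rs")
  case True
  then obtain j0 where j0: "phase_start k rs j0 \<le> i" "i < phase_start k rs (Suc j0)"
    by (rule phase_exists)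
  have "{j \<in> later_phases k rs. phase_start k rs (j - 1) \<le> i \<and> i < phase_start k rs (Suc j)} \<subseteq> {j0, Suc j0}"
  proof
    fix j assume j: "j \<in> {j \<in> later_phases k rs. phase_start k rs (j - 1) \<le> i \<and> i < phase_start k rs (Suc j)}"
    then have j1: "Suc (j - 1) = j" unfolding later_phases_def by auto
    show "j \<in> {j0, Suc j0}"
    proof (cases "i < phase_start k rs j")
      case True
      then have "j - 1 = j0" using phase_unique[of k rs "j - 1" i j0] j j0 j1 by auto
      then show ?thesis using j1 by auto
    next
      case False
      then have "j = j0" using phase_unique[of k rs j i j0] j j0 by auto
      then show ?thesis by simp
    qed
  qed
  then have "card {j \<in> later_phases k rs. phase_start k rs (j - 1) \<le> i \<and> i < phase_start k rs (Suc j)}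
      \<le> card {j0, Suc j0}"
    by (rule card_mono[rotated]) simp
  also have "\<dots> \<le> 2" by (simp add: card_insert_if)
  finally show ?thesis .
next
  case False
  have "\<not> i < phase_start k rs (Suc j)" for j
    using phase_start_le_length[of k rs "Suc j"] False by simp
  then show ?thesis by simp
qed

lemma new_page_count_le_window_faults:
  assumes "k \<ge> 1" "offline_run k rs Cs" "j \<in> later_phases k rs"
  shows "new_page_count k rs j \<le>
    card ({i. i < length rs \<and> rs ! i \<notin> Cs ! i} \<inter> {i. phase_start k rs (j - 1) \<le> i \<and> i < phase_start k rs (Suc j)})"
proof -
  let ?a = "phase_start k rs (j - 1)" and ?b = "phase_start k rs j" and ?c = "phase_start k rs (Suc j)"
  let ?old = "phase_pages k rs (j - 1)" and ?cur = "phase_pages k rs j"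
  have j: "Suc (j - 1) = j" "?b < length rs" using assms(3) unfolding later_phases_def by auto
  have ord: "?a \<le> ?b" "?b \<le> ?c" "?c \<le> length rs"
    using phase_start_mono[of "j - 1" j] phase_start_le_Suc phase_start_le_length by auto
  have "card ?old = k" using phase_pages_full(2)[OF assms(1), of rs "j - 1"] j by simp
  then have "k + new_page_count k rs j = card (?old \<union> (?cur - ?old))"
    unfolding new_page_count_def by (subst card_Un_disjoint) auto
  also have "?old \<union> (?cur - ?old) = pages_between rs ?a ?c"
    using pages_between_split[OF ord(1,2), of rs] unfolding phase_pages_def j(1) by blast
  also have "card \<dots> \<le> k + card {i. ?a \<le> i \<and> i < ?c \<and> rs ! i \<notin> Cs ! i}"
    using card_pages_between_le_faults[OF assms(2) order.trans[OF ord(1,2)] ord(3)] .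
  also have "{i. ?a \<le> i \<and> i < ?c \<and> rs ! i \<notin> Cs ! i} =
      {i. i < length rs \<and> rs ! i \<notin> Cs ! i} \<inter> {i. ?a \<le> i \<and> i < ?c}"
    using ord(3) by auto
  finally show ?thesis by simp
qed

lemma new_page_count_sum_le_run_cost:
  assumes "k \<ge> 1" "offline_run k rs Cs"
  shows "(\<Sum>j\<in>later_phases k rs. new_page_count k rs j) \<le> 2 * run_cost rs Cs"
proof -
  let ?F = "{i. i < length rs \<and> rs ! i \<notin> Cs ! i}"
    and ?W = "\<lambda>j. {i. phase_start k rs (j - 1) \<le> i \<and> i < phase_start k rs (Suc j)}"
  have "(\<Sum>j\<in>later_phases k rs. new_page_count k rs j) \<le> (\<Sum>j\<in>later_phases k rs. card (?F \<inter> ?W j))"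
    using new_page_count_le_window_faults[OF assms] by (rule sum_mono)
  also have "\<dots> \<le> 2 * card ?F"
    using card_phase_windows_le_2[of k rs] by (intro sum_card_Int_le_mult_card) auto
  finally show ?thesis unfolding run_cost_def .
qed

lemma offline_run_exists:
  assumes "k \<ge> 1"
  shows "\<exists>Cs. offline_run k rs Cs"
proof -
  define cache :: "nat \<Rightarrow> 'a set" where
    "cache = rec_nat {} (\<lambda>i C. if rs ! i \<in> C then C else if card C < k then insert (rs ! i) C
       else insert (rs ! i) (C - {SOME q. q \<in> C}))"
  have "(SOME q. q \<in> cache i) \<in> cache i" if "\<not> card (cache i) < k" for i
    using that assms by (metis card.empty ex_in_conv less_le_trans zero_less_one someI_ex)
  then have "offline_run k rs (map cache [0..<Suc (length rs)])"
    unfolding offline_run_def by (auto simp: cache_def nth_append simp del: upt_Suc)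
  then show ?thesis ..
qed

lemma new_page_count_sum_le_OPT:
  assumes "k \<ge> 1"
  shows "(\<Sum>j\<in>later_phases k rs. new_page_count k rs j) \<le> 2 * OPT k rs"
proof -
  let ?S = "{run_cost rs Cs | Cs. offline_run k rs Cs}"
  have "?S \<subseteq> {..length rs}"
    unfolding run_cost_def by (auto intro: order.trans[OF card_mono[of "{..<length rs}"]])
  then have "finite ?S" by (rule finite_subset) simp
  moreover have "?S \<noteq> {}" using offline_run_exists[OF assms, of rs] by blast
  ultimately have "OPT k rs \<in> ?S" unfolding OPT_def by (rule Min_in)
  then show ?thesis using new_page_count_sum_le_run_cost[OF assms] by auto
qed

lemma mult_ln_le_tangent:
  fixes l e Y :: real
  assumes "l > 0" "e \<ge> 0" "Y \<ge> 0"
  shows "l * ln (1 + e / l) \<le> l * ln (1 + Y) + (e - Y * l) / (1 + Y)"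
proof -
  have pos: "1 + e / l > 0" "1 + Y > 0" using assms by (simp_all add: add_pos_nonneg)
  have "ln (1 + e / l) - ln (1 + Y) = ln ((1 + e / l) / (1 + Y))" using pos by (simp add: ln_div)
  also have "\<dots> \<le> (1 + e / l) / (1 + Y) - 1" using pos by (intro ln_le_minus_one) simp
  also have "\<dots> = (e / l - Y) / (1 + Y)" using pos by (simp add: field_simps)
  finally have "l * (ln (1 + e / l) - ln (1 + Y)) \<le> l * ((e / l - Y) / (1 + Y))"
    using assms(1) by (intro mult_left_mono) auto
  also have "\<dots> = (l * (e / l - Y)) / (1 + Y)" by simp
  also have "l * (e / l - Y) = e - Y * l" using assms(1) by (simp add: right_diff_distrib mult.commute)
  finally show ?thesis by (simp add: right_diff_distrib)
qed

text \<open>The tangent bound is applied at \<open>Y = 2E/OPT\<close>, where \<open>\<gamma>(E/OPT) E = 2 OPT (ln (1 + Y) + 1)\<close>.\<close>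

lemma sum_phase_bounds_le:
  fixes l e :: "nat \<Rightarrow> real" and opt E :: real
  assumes "finite J" "\<And>j. j \<in> J \<Longrightarrow> l j > 0" "\<And>j. j \<in> J \<Longrightarrow> e j \<ge> 0"
    and "opt > 0" "E > 0" "E = (\<Sum>j\<in>J. e j)" "(\<Sum>j\<in>J. l j) \<le> 2 * opt"
  shows "(\<Sum>j\<in>J. phase_bound (l j) (e j)) \<le> 2 * opt + gamma (E / opt) * E"
proof -
  define Y where "Y = 2 * E / opt"
  define L where "L = (\<Sum>j\<in>J. l j)"
  have Y: "Y > 0" unfolding Y_def using assms(4,5) by simp
  have "(\<Sum>j\<in>J. phase_bound (l j) (e j))
      \<le> (\<Sum>j\<in>J. 2 * l j + (l j * ln (1 + Y) + (e j - Y * l j) / (1 + Y)))"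
    unfolding phase_bound_def using mult_ln_le_tangent assms(2,3) Y by (intro sum_mono add_left_mono) auto
  also have "\<dots> = 2 * L + L * ln (1 + Y) + (E - Y * L) / (1 + Y)"
    unfolding L_def assms(6)
    by (simp add: sum.distrib sum_distrib_left sum_distrib_right sum_subtractf sum_divide_distrib[symmetric])
  also have "\<dots> \<le> 2 * opt + 2 * opt * (ln (1 + Y) + 1)"
  proof -
    define q where "q = Y / (1 + Y)"
    have q: "0 \<le> q" "q \<le> 1" unfolding q_def using Y by auto
    have ln: "0 \<le> ln (1 + Y)" using Y by simp
    have "E / (1 + Y) = opt / 2 * q" unfolding q_def Y_def using assms(4,5) by (simp add: field_simps)
    moreover have "(E - Y * L) / (1 + Y) = E / (1 + Y) - L * q"
      unfolding q_def by (simp add: diff_divide_distrib mult.commute)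
    moreover have "L \<le> 2 * opt" unfolding L_def using assms(7) .
    then have "0 \<le> 4 * opt - 2 * (opt * q) - 2 * L + L * q" "0 \<le> 2 * (opt * ln (1 + Y)) - L * ln (1 + Y)"
      using mult_right_mono[of L "2 * opt" "2 - q"] mult_right_mono[of L "2 * opt" "ln (1 + Y)"] q ln
      by (simp_all add: algebra_simps)
    moreover have "0 \<le> opt * q" using assms(4) q by simp
    ultimately show ?thesis by (simp add: algebra_simps)
  qed
  also have "2 * opt * (ln (1 + Y) + 1) = gamma (E / opt) * E"
    unfolding gamma_def Y_def using assms(4,5) by (simp add: field_simps)
  finally show ?thesis .
qed

lemma mp_expected_cost_le:
  assumes "k \<ge> 1" "length ps = length rs"
  shows "mp_expected_cost k rs ps \<le> k
    + (\<Sum>j\<in>later_phases k rs. phase_bound (new_page_count k rs j) (phase_eta k rs ps True j))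
    + H k * eta k rs ps False"
proof -
  have "(\<Sum>j\<in>later_phases k rs. \<Sum>i = phase_start k rs j..<phase_start k rs (Suc j). fault_prob k rs ps i)
      \<le> (\<Sum>j\<in>later_phases k rs. phase_bound (new_page_count k rs j) (phase_eta k rs ps True j)
        + phase_eta k rs ps False j * H k)"
    using later_phase.phase_cost_le[OF later_phase.intro[OF assms(1)]]
    unfolding later_phases_def by (intro sum_mono) auto
  then show ?thesis
    using mp_expected_cost_le_later_phases[OF assms]
    by (simp add: eta_eq_sum_phase_eta sum.distrib sum_distrib_left mult.commute)
qed

lemma later_phase_bounds_le_OPT:
  assumes "k \<ge> 1" "OPT k rs > 0" "eta k rs ps True > 0"
  shows "(\<Sum>j\<in>later_phases k rs. phase_bound (new_page_count k rs j) (phase_eta k rs ps True j))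
    \<le> 2 * real (OPT k rs) + gamma (eta k rs ps True / OPT k rs) * eta k rs ps True"
proof (rule sum_phase_bounds_le)
  show "real (new_page_count k rs j) > 0" if "j \<in> later_phases k rs" for j
    using later_phase.ell_ge_1[OF later_phase.intro[OF assms(1)]] that
    unfolding later_phases_def by fastforce
  show "(\<Sum>j\<in>later_phases k rs. real (new_page_count k rs j)) \<le> 2 * real (OPT k rs)"
    using new_page_count_sum_le_OPT[OF assms(1), of rs] by (simp flip: of_nat_sum)
  show "real (eta k rs ps True) = (\<Sum>j\<in>later_phases k rs. real (phase_eta k rs ps True j))"
    by (simp add: eta_eq_sum_phase_eta)
qed (use assms(2,3) in simp_all)

theorem theorem4:
  fixes k :: nat
  assumes "k \<ge> 1"
  shows "\<exists>b :: real. \<forall>(rs :: 'a list) (ps :: bool list).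
           length ps = length rs \<longrightarrow> OPT k rs > 0 \<longrightarrow> eta k rs ps True > 0 \<longrightarrow>
           mp_expected_cost k rs ps
             \<le> 2 * real (OPT k rs) + H k * real (eta k rs ps False)
                + gamma (real (eta k rs ps True) / real (OPT k rs)) * real (eta k rs ps True) + b"
proof (intro exI allI impI)
  fix rs :: "'a list" and ps :: "bool list"
  assume len: "length ps = length rs" and pos: "OPT k rs > 0" "eta k rs ps True > 0"
  show "mp_expected_cost k rs ps
      \<le> 2 * real (OPT k rs) + H k * real (eta k rs ps False)
        + gamma (real (eta k rs ps True) / real (OPT k rs)) * real (eta k rs ps True) + real k"
    using mp_expected_cost_le[OF assms len] later_phase_bounds_le_OPT[OF assms pos] by linarith
qed

end
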